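(* Let $m_\infty(0,0)=(\mu_{ij})_{0\le i,j<\infty}$ be a semi-infinite complex matrix, let $\Lambda$ be the semi-infinite shift matrix $\Lambda_{ij}=\delta_{j-i,1}$, and set $m_\infty(t,s)=e^{\sum_{i\ge1}t_i\Lambda^i}\,m_\infty(0,0)\,e^{-\sum_{i\ge1}s_i\Lambda^{\top i}}$ and $\tau_n(t,s)=\det m_n(t,s)$, where $m_n(t,s)$ is the upper-left $n\times n$ block of $m_\infty(t,s)$. Then for $n>0$, $$\tau_n(t,s)=\sum_{\lambda,\nu}\det\big(m^{\lambda,\nu}\big)\,s_\lambda(t)\,s_\nu(-s),\qquad m^{\lambda,\nu}=\big(\mu_{\lambda_i-i+n,\;\nu_j-j+n}\big)_{1\le i,j\le n},$$ the sum being over all Young diagrams $\lambda,\nu$ with at most $n$ rows.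
   Context: Schur polynomials: $e^{\sum_{i\ge1}t_iz^i}=\sum_{k\ge0}p_k(t)z^k$, $p_k=0$ for $k<0$; for a Young diagram $\lambda_1\ge\dots\ge\lambda_n\ge0$, $s_\lambda(t)=\det(p_{\lambda_i-i+j}(t))_{1\le i,j\le n}$. Everything is understood as formal power series in $t=(t_1,t_2,\dots)$, $s=(s_1,s_2,\dots)$. *)

theory Defs
  imports "HOL-Analysis.Analysis" "HOL-Library.Poly_Mapping"
    "HOL-Combinatorics.Permutations" "Jordan_Normal_Form.Determinant"
begin

type_synonym 'v mon = "'v \<Rightarrow>\<^sub>0 nat"
type_synonym 'v ser = "'v mon \<Rightarrow> complex"

definition ser_const :: "complex \<Rightarrow> 'v ser" where
  "ser_const c = (\<lambda>m. if m = 0 then c else 0)"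

definition ser_zero :: "'v ser" where "ser_zero = ser_const 0"
definition ser_one :: "'v ser" where "ser_one = ser_const 1"

definition ser_var :: "'v \<Rightarrow> 'v ser" where
  "ser_var v = (\<lambda>m. if m = Poly_Mapping.single v 1 then 1 else 0)"

definition ser_neg :: "'v ser \<Rightarrow> 'v ser" where
  "ser_neg f = (\<lambda>m. - f m)"

definition ser_scale :: "complex \<Rightarrow> 'v ser \<Rightarrow> 'v ser" where
  "ser_scale c f = (\<lambda>m. c * f m)"

definition ser_mult :: "'v ser \<Rightarrow> 'v ser \<Rightarrow> 'v ser" where
  "ser_mult f g = (\<lambda>m. \<Sum>(a, b) \<in> {(a, b). a + b = m}. f a * g b)"

definition ser_pow :: "'v ser \<Rightarrow> nat \<Rightarrow> 'v ser" where
  "ser_pow f k = (ser_mult f ^^ k) ser_one"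

definition ser_prod_list :: "'v ser list \<Rightarrow> 'v ser" where
  "ser_prod_list fs = foldr ser_mult fs ser_one"

text \<open>Sum of a (possibly infinite) family of series, taken coefficientwise.  In all uses
  below every coefficient receives only finitely many nonzero contributions.\<close>
definition ser_sum :: "('i \<Rightarrow> 'v ser) \<Rightarrow> 'i set \<Rightarrow> 'v ser" where
  "ser_sum F I = (\<lambda>m. \<Sum>\<^sub>\<infinity>i\<in>I. F i m)"

definition ser_exp :: "'v ser \<Rightarrow> 'v ser" where
  "ser_exp f = ser_sum (\<lambda>k. ser_scale (1 / fact k) (ser_pow f k)) UNIV"

definition ser_monom :: "(nat \<Rightarrow> 'w ser) \<Rightarrow> nat mon \<Rightarrow> 'w ser" where
  "ser_monom \<sigma> a = ser_prod_list (map (\<lambda>v. ser_pow (\<sigma> v) (Poly_Mapping.lookup a v)) (sorted_list_of_set (Poly_Mapping.keys a)))"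

definition ser_subst :: "(nat \<Rightarrow> 'w ser) \<Rightarrow> nat ser \<Rightarrow> 'w ser" where
  "ser_subst \<sigma> g = ser_sum (\<lambda>a. ser_scale (g a) (ser_monom \<sigma> a)) UNIV"

definition ser_det :: "nat \<Rightarrow> (nat \<Rightarrow> nat \<Rightarrow> 'v ser) \<Rightarrow> 'v ser" where
  "ser_det n M = ser_sum (\<lambda>\<pi>. ser_scale (of_int (sign \<pi>))
      (ser_prod_list (map (\<lambda>i. M i (\<pi> i)) [0..<n]))) {\<pi>. \<pi> permutes {..<n}}"

text \<open>We work with series in the nat-indexed variables; variable 0 plays the role of z
  and variable i >= 1 the role of t_i.  The generating series is
  \<open>e^{\<Sum>_{i\<ge>1} t_i z^i}\<close>.\<close>
definition gen_series :: "nat ser" where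
  "gen_series = ser_exp (ser_sum (\<lambda>i. ser_mult (ser_var i) (ser_pow (ser_var 0) i)) {1..})"

text \<open>p_k(t) = coefficient of z^k in the generating series (a series in t_1, t_2, ...);
  p_k = 0 for k < 0.\<close>
definition schur_p :: "int \<Rightarrow> nat ser" where
  "schur_p k = (if k < 0 then ser_zero
     else (\<lambda>a. if Poly_Mapping.lookup a 0 = 0 then gen_series (a + Poly_Mapping.single 0 (nat k)) else 0))"

text \<open>Young diagrams with at most n rows: weakly decreasing lists of length n (padded by 0).\<close>
definition young :: "nat \<Rightarrow> nat list set" where
  "young n = {lam. length lam = n \<and> sorted_wrt (\<lambda>x y. x \<ge> y) lam}"

definition schur :: "nat list \<Rightarrow> nat ser" where
  "schur lam = ser_det (length lam) (\<lambda>i j. schur_p (int (lam ! i) - int i + int j))"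

text \<open>Variables: Inl i is t_i, Inr i is s_i.  Semi-infinite matrices of series.\<close>
type_synonym smat = "nat \<Rightarrow> nat \<Rightarrow> (nat + nat) ser"

definition smat_mult :: "smat \<Rightarrow> smat \<Rightarrow> smat" where
  "smat_mult A B = (\<lambda>i j. ser_sum (\<lambda>k. ser_mult (A i k) (B k j)) UNIV)"

definition smat_one :: smat where
  "smat_one = (\<lambda>i j. if i = j then ser_one else ser_zero)"

definition smat_pow :: "smat \<Rightarrow> nat \<Rightarrow> smat" where
  "smat_pow A k = (smat_mult A ^^ k) smat_one"

definition smat_exp :: "smat \<Rightarrow> smat" where
  "smat_exp A = (\<lambda>i j. ser_sum (\<lambda>k. ser_scale (1 / fact k) (smat_pow A k i j)) UNIV)"

definition shift :: smat where
  "shift = (\<lambda>i j. if j = Suc i then ser_one else ser_zero)"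

definition shiftT :: smat where
  "shiftT = (\<lambda>i j. shift j i)"

definition t_flow :: smat where
  "t_flow = (\<lambda>a b. ser_sum (\<lambda>i. ser_mult (ser_var (Inl i)) (smat_pow shift i a b)) {1..})"

definition s_flow :: smat where
  "s_flow = (\<lambda>a b. ser_neg (ser_sum (\<lambda>i. ser_mult (ser_var (Inr i)) (smat_pow shiftT i a b)) {1..}))"

definition m_inf :: "(nat \<Rightarrow> nat \<Rightarrow> complex) \<Rightarrow> smat" where
  "m_inf \<mu> = smat_mult (smat_mult (smat_exp t_flow) (\<lambda>i j. ser_const (\<mu> i j))) (smat_exp s_flow)"

definition tau :: "(nat \<Rightarrow> nat \<Rightarrow> complex) \<Rightarrow> nat \<Rightarrow> (nat + nat) ser" where
  "tau \<mu> n = ser_det n (m_inf \<mu>)"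

definition t_vars :: "nat \<Rightarrow> (nat + nat) ser" where
  "t_vars i = ser_var (Inl i)"

definition neg_s_vars :: "nat \<Rightarrow> (nat + nat) ser" where
  "neg_s_vars i = ser_neg (ser_var (Inr i))"

end

theory Submission
  imports Defs
begin

text \<open>
  The matrix \<open>exp(\<Sigma> t\<^sub>i \<Lambda>\<^sup>i)\<close> is the upper triangular Toeplitz matrix \<open>(p\<^sub>j\<^sub>-\<^sub>i(t))\<close> and
  \<open>exp(-\<Sigma> s\<^sub>i (\<Lambda>\<^sup>T)\<^sup>i)\<close> the lower triangular Toeplitz matrix \<open>(p\<^sub>i\<^sub>-\<^sub>j(-s))\<close>, so \<open>m\<^sub>n(t,s)\<close> is the
  product of an \<open>n \<times> \<infinity>\<close>, an \<open>\<infinity> \<times> \<infinity>\<close> and an \<open>\<infinity> \<times> n\<close> matrix.  Giving \<open>t\<^sub>i\<close> and \<open>s\<^sub>i\<close>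
  weight \<open>i\<close>, \<open>p\<^sub>d\<close> is homogeneous of weight \<open>d\<close>; hence for the coefficient of a monomial of
  weight \<open>w\<close> the product may be truncated to \<open>N > n + w\<close> inner indices.  Applying the
  Cauchy--Binet formula twice expands the determinant of the truncated product over pairs of
  \<open>n\<close>-subsets of \<open>{0..<N}\<close>.  Writing such a subset as \<open>{\<lambda>\<^sub>i - i + n}\<close> for a Young diagram
  \<open>\<lambda>\<close> with at most \<open>n\<close> rows turns the minors of the two Toeplitz factors into \<open>s\<^sub>\<lambda>(t)\<close> and
  \<open>s\<^sub>\<nu>(-s)\<close> and the minors of \<open>m\<^sub>\<infinity>(0,0)\<close> into \<open>det m\<^sup>\<lambda>\<^sup>,\<^sup>\<nu>\<close>; diagrams too large for
  \<open>N\<close> contribute nothing of weight \<open>w\<close>.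
\<close>

abbreviation lookup :: "('a \<Rightarrow>\<^sub>0 'b::zero) \<Rightarrow> 'a \<Rightarrow> 'b" where "lookup \<equiv> Poly_Mapping.lookup"
abbreviation keys :: "('a \<Rightarrow>\<^sub>0 'b::zero) \<Rightarrow> 'a set" where "keys \<equiv> Poly_Mapping.keys"
abbreviation single :: "'a \<Rightarrow> 'b \<Rightarrow> ('a \<Rightarrow>\<^sub>0 'b::zero)" where "single \<equiv> Poly_Mapping.single"

section \<open>The ring of formal power series\<close>

lemma finite_mon_below: "finite {a :: 'v mon. \<forall>v. lookup a v \<le> lookup m v}"
proof -
  let ?A = "{a :: 'v mon. \<forall>v. lookup a v \<le> lookup m v}"
  let ?r = "\<lambda>a :: 'v mon. restrict (lookup a) (keys m)"
  have "?r ` ?A \<subseteq> Pi\<^sub>E (keys m) (\<lambda>v. {..lookup m v})"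
    by (auto simp: PiE_def Pi_def)
  then have "finite (?r ` ?A)"
    by (rule finite_subset) (auto intro!: finite_PiE)
  moreover have "inj_on ?r ?A"
  proof (rule inj_onI)
    fix a b assume a: "a \<in> ?A" and b: "b \<in> ?A" and eq: "?r a = ?r b"
    show "a = b"
    proof (rule poly_mapping_eqI)
      fix v
      show "lookup a v = lookup b v"
      proof (cases "v \<in> keys m")
        case True
        then show ?thesis using fun_cong[OF eq, of v] by simp
      next
        case False
        then have "lookup m v = 0" by (simp add: in_keys_iff)
        then show ?thesis using a b by (metis le_zero_eq mem_Collect_eq)
      qed
    qed
  qed
  ultimately show ?thesis using finite_imageD by blast
qed

lemma finite_mon_splits: "finite {(a, b). a + b = (m :: 'v mon)}"
proof -
  have "{(a, b). a + b = m} \<subseteq> {a. \<forall>v. lookup a v \<le> lookup m v} \<times> {a. \<forall>v. lookup a v \<le> lookup m v}"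
    by (auto simp: lookup_add)
  then show ?thesis by (rule finite_subset) (intro finite_cartesian_product finite_mon_below)
qed

lemma sum_eq_single_support:
  assumes "finite A" "x \<in> A" "\<And>y. y \<in> A \<Longrightarrow> y \<noteq> x \<Longrightarrow> f y = 0"
  shows "sum f A = f x"
  using assms by (simp add: sum.remove sum.neutral)

lemma infsum_eq_sum_support:
  assumes "finite S" "\<And>x. x \<in> A \<Longrightarrow> x \<notin> S \<Longrightarrow> f x = 0"
  shows "infsum f A = sum f (A \<inter> S)"
proof -
  have "infsum f A = infsum f (A \<inter> S)"
    by (rule infsum_cong_neutral) (use assms in auto)
  also have "\<dots> = sum f (A \<inter> S)" using assms(1) by simp
  finally show ?thesis .
qed

lemma infsum_eq_single_support:
  assumes "\<And>y. y \<in> A \<Longrightarrow> y \<noteq> x \<Longrightarrow> f y = 0"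
  shows "infsum f A = (if x \<in> A then f x else 0)"
proof -
  have "infsum f A = sum f (A \<inter> {x})"
    by (rule infsum_eq_sum_support) (use assms in auto)
  then show ?thesis by (cases "x \<in> A") auto
qed

lemma ser_mult_assoc:
  fixes f g h :: "'v ser"
  shows "ser_mult (ser_mult f g) h = ser_mult f (ser_mult g h)"
proof
  fix m :: "'v mon"
  let ?T = "{(a, b, c). a + b + c = m}"
  have "ser_mult (ser_mult f g) h m =
      (\<Sum>(p, q) \<in> Sigma {(a, b). a + b = m} (\<lambda>p. {(c, d). c + d = fst p}). f (fst q) * g (snd q) * h (snd p))"
    unfolding ser_mult_def
    by (subst sum.Sigma[symmetric]) (auto simp: finite_mon_splits sum_distrib_right case_prod_beta)
  also have "\<dots> = (\<Sum>(c, d, e) \<in> ?T. f c * g d * h e)"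
    by (rule sum.reindex_bij_witness[where i = "\<lambda>(c, d, e). ((c + d, e), (c, d))"
          and j = "\<lambda>((a, b), (c, d)). (c, d, b)"]) auto
  also have "\<dots> = (\<Sum>(p, q) \<in> Sigma {(a, b). a + b = m} (\<lambda>p. {(c, d). c + d = snd p}). f (fst p) * g (fst q) * h (snd q))"
    by (rule sum.reindex_bij_witness[where j = "\<lambda>(c, d, e). ((c, d + e), (d, e))"
          and i = "\<lambda>((a, b), (c, d)). (a, c, d)"]) (auto simp: add.assoc)
  also have "\<dots> = ser_mult f (ser_mult g h) m"
    unfolding ser_mult_def
    by (subst sum.Sigma[symmetric]) (auto simp: finite_mon_splits sum_distrib_left case_prod_beta mult.assoc)
  finally show "ser_mult (ser_mult f g) h m = ser_mult f (ser_mult g h) m" .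
qed

lemma ser_mult_commute: "ser_mult f g = ser_mult g f"
  unfolding ser_mult_def fun_eq_iff
  by (intro allI sum.reindex_bij_witness[where i = "\<lambda>(a, b). (b, a)" and j = "\<lambda>(a, b). (b, a)"])
    (auto simp: add.commute mult.commute)

lemma ser_mult_const_left: "ser_mult (ser_const c) g m = c * g m"
  unfolding ser_mult_def ser_const_def
  by (subst sum_eq_single_support[where x = "(0, m)"]) (auto simp: finite_mon_splits split: if_splits)

lemma ser_zero_apply [simp]: "ser_zero m = 0"
  by (simp add: ser_zero_def ser_const_def)

lemma ser_mult_zero_left [simp]: "ser_mult ser_zero g = ser_zero"
  by (simp add: fun_eq_iff ser_zero_def ser_mult_const_left, simp add: ser_const_def)

lemma ser_mult_zero_right [simp]: "ser_mult g ser_zero = ser_zero"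
  by (subst ser_mult_commute) simp

lemma ser_mult_one_left [simp]: "ser_mult ser_one g = g"
  by (simp add: fun_eq_iff ser_one_def ser_mult_const_left)

lemma ser_mult_one_right [simp]: "ser_mult g ser_one = g"
  by (subst ser_mult_commute) simp

typedef 'v mfps = "UNIV :: 'v ser set"
  morphisms coeffs mfps
  by simp

setup_lifting type_definition_mfps

instantiation mfps :: (type) comm_ring_1
begin
lift_definition zero_mfps :: "'v mfps" is ser_zero .
lift_definition one_mfps :: "'v mfps" is ser_one .
lift_definition plus_mfps :: "'v mfps \<Rightarrow> 'v mfps \<Rightarrow> 'v mfps" is "\<lambda>f g m. f m + g m" .
lift_definition minus_mfps :: "'v mfps \<Rightarrow> 'v mfps \<Rightarrow> 'v mfps" is "\<lambda>f g m. f m - g m" .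
lift_definition uminus_mfps :: "'v mfps \<Rightarrow> 'v mfps" is ser_neg .
lift_definition times_mfps :: "'v mfps \<Rightarrow> 'v mfps \<Rightarrow> 'v mfps" is ser_mult .

instance
proof
  fix a b c :: "'v mfps"
  show "a * b * c = a * (b * c)" by transfer (rule ser_mult_assoc)
  show "a * b = b * a" by transfer (rule ser_mult_commute)
  show "1 * a = a" by transfer simp
  show "(a + b) * c = a * c + b * c"
    by transfer (auto simp: ser_mult_def fun_eq_iff sum.distrib[symmetric] distrib_right
        case_prod_beta intro!: sum.cong)
  show "a + b + c = a + (b + c)" by transfer (simp add: fun_eq_iff)
  show "a + b = b + a" by transfer (simp add: fun_eq_iff)
  show "0 + a = a" by transfer simp
  show "- a + a = 0" by transfer (simp add: ser_neg_def fun_eq_iff)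
  show "a - b = a + - b" by transfer (simp add: ser_neg_def)
  show "(0 :: 'v mfps) \<noteq> 1" by transfer (auto simp: ser_one_def ser_zero_def ser_const_def fun_eq_iff)
qed
end

lemma coeffs_times: "coeffs (x * y) = ser_mult (coeffs x) (coeffs y)"
  by transfer simp

lemma coeffs_one: "coeffs 1 = ser_one"
  by transfer simp

lemma coeffs_zero: "coeffs 0 = ser_zero"
  by transfer simp

lemma coeffs_zero_apply [simp]: "coeffs 0 m = 0"
  by transfer simp

lemma coeffs_plus [simp]: "coeffs (x + y) m = coeffs x m + coeffs y m"
  by transfer simp

lemma coeffs_uminus [simp]: "coeffs (- x) m = - coeffs x m"
  by transfer (simp add: ser_neg_def)

lemma coeffs_sum [simp]: "coeffs (sum F A) m = (\<Sum>x\<in>A. coeffs (F x) m)"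
  by (induction A rule: infinite_finite_induct) auto

lemma mfps_ser_zero: "mfps ser_zero = 0"
  by (metis coeffs_inverse coeffs_zero)

lemma mfps_ser_one: "mfps ser_one = 1"
  by (metis coeffs_inverse coeffs_one)

definition mfps_const :: "complex \<Rightarrow> 'v mfps" where
  "mfps_const c = mfps (ser_const c)"

lemma coeffs_mfps_const_times [simp]: "coeffs (mfps_const c * x) m = c * coeffs x m"
  by (simp add: mfps_const_def coeffs_times mfps_inverse ser_mult_const_left)

interpretation mfps_const: comm_ring_hom mfps_const
proof
  show "mfps_const 0 = 0" by (simp add: mfps_const_def mfps_ser_zero[symmetric] ser_zero_def)
  show "mfps_const 1 = 1" by (simp add: mfps_const_def mfps_ser_one[symmetric] ser_one_def)
  fix x y
  show "mfps_const (x + y) = mfps_const x + mfps_const y"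
    by (rule coeffs_inject[THEN iffD1]) (auto simp: mfps_const_def mfps_inverse ser_const_def fun_eq_iff)
  show "mfps_const (x * y) = mfps_const x * mfps_const y"
    by (rule coeffs_inject[THEN iffD1])
      (simp add: coeffs_times mfps_const_def mfps_inverse ser_mult_const_left fun_eq_iff, simp add: ser_const_def)
qed

lemma ser_scale_eq: "ser_scale c f = coeffs (mfps_const c * mfps f)"
  by (simp add: fun_eq_iff ser_scale_def mfps_inverse)

lemma ser_neg_eq: "ser_neg f = coeffs (- mfps f)"
  by (simp add: fun_eq_iff ser_neg_def mfps_inverse)

lemma ser_pow_eq: "ser_pow f k = coeffs (mfps f ^ k)"
  by (induction k) (simp_all add: ser_pow_def coeffs_one coeffs_times mfps_inverse)

lemma ser_prod_list_eq: "ser_prod_list fs = coeffs (prod_list (map mfps fs))"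
  by (induction fs) (simp_all add: ser_prod_list_def coeffs_one coeffs_times mfps_inverse)

lemma ser_sum_finite: "finite A \<Longrightarrow> ser_sum F A = coeffs (\<Sum>x\<in>A. mfps (F x))"
  by (simp add: ser_sum_def fun_eq_iff mfps_inverse)

lemma ser_det_eq: "ser_det n M = coeffs (det (mat n n (\<lambda>(i, j). mfps (M i j))))"
proof -
  let ?M = "mat n n (\<lambda>(i, j). mfps (M i j))"
  have "ser_det n M = coeffs (\<Sum>\<pi> | \<pi> permutes {..<n}.
      mfps_const (of_int (sign \<pi>)) * prod_list (map (\<lambda>i. mfps (M i (\<pi> i))) [0..<n]))"
    unfolding ser_det_def ser_sum_finite[OF finite_permutations[OF finite_lessThan]]
      ser_scale_eq ser_prod_list_eq
    by (simp add: mfps_inverse o_def coeffs_inverse)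
  also have "(\<Sum>\<pi> | \<pi> permutes {..<n}.
      mfps_const (of_int (sign \<pi>)) * prod_list (map (\<lambda>i. mfps (M i (\<pi> i))) [0..<n])) =
      (\<Sum>\<pi> | \<pi> permutes {0..<n}. of_int (sign \<pi>) * (\<Prod>i = 0..<n. ?M $$ (i, \<pi> i)))"
  proof (rule sum.cong)
    fix \<pi> assume "\<pi> \<in> {\<pi>. \<pi> permutes {0..<n}}"
    then have "\<And>i. i < n \<Longrightarrow> \<pi> i < n" using permutes_in_image by fastforce
    then show "mfps_const (of_int (sign \<pi>)) * prod_list (map (\<lambda>i. mfps (M i (\<pi> i))) [0..<n]) =
        of_int (sign \<pi>) * (\<Prod>i = 0..<n. ?M $$ (i, \<pi> i))"
      by (simp add: prod.distinct_set_conv_list[symmetric] mfps_const.hom_of_int)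
  qed (simp add: atLeast0LessThan)
  also have "\<dots> = det ?M"
    by (rule det_def'[symmetric]) simp
  finally show ?thesis .
qed

section \<open>Monomials and renaming of variables\<close>

definition mfps_monom :: "'v mon \<Rightarrow> 'v mfps" where
  "mfps_monom p = mfps (\<lambda>q. if q = p then 1 else 0)"

lemma coeffs_mfps_monom: "coeffs (mfps_monom p) q = (if q = p then 1 else 0)"
  by (simp add: mfps_monom_def mfps_inverse)

lemma mfps_monom_mult: "mfps_monom p * mfps_monom q = mfps_monom (p + q)"
proof (rule coeffs_inject[THEN iffD1], rule ext)
  fix m
  have delta: "(\<lambda>(a, b). (if a = p then 1 else 0) * (if b = q then 1 else 0 :: complex)) =
      (\<lambda>x. if x = (p, q) then 1 else 0)"
    by (auto simp: fun_eq_iff)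
  show "coeffs (mfps_monom p * mfps_monom q) m = coeffs (mfps_monom (p + q)) m"
    unfolding coeffs_times ser_mult_def coeffs_mfps_monom delta
    using finite_mon_splits[of m] by (simp add: eq_commute)
qed

lemma mfps_monom_0: "mfps_monom 0 = 1"
  by (rule coeffs_inject[THEN iffD1]) (simp add: coeffs_one ser_one_def ser_const_def coeffs_mfps_monom fun_eq_iff)

lemma prod_mfps_monom: "(\<Prod>v\<in>K. mfps_monom (p v)) = mfps_monom (\<Sum>v\<in>K. p v)"
  by (induction K rule: infinite_finite_induct) (simp_all add: mfps_monom_0 mfps_monom_mult)

lemma mfps_monom_single_power: "mfps_monom (single v 1) ^ k = mfps_monom (single v k)"
proof (induction k)
  case 0
  then show ?case by (simp add: mfps_monom_0)
next
  case (Suc k)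
  have "single v (Suc k) = single v 1 + single v k" by (simp add: single_add[symmetric])
  then show ?case using Suc by (simp add: mfps_monom_mult)
qed

lemma ser_var_eq: "ser_var v = coeffs (mfps_monom (single v 1))"
  by (simp add: ser_var_def coeffs_mfps_monom fun_eq_iff)

definition mon_push :: "('a \<Rightarrow> 'b) \<Rightarrow> 'a mon \<Rightarrow> 'b mon" where
  "mon_push f a = (\<Sum>v\<in>keys a. single (f v) (lookup a v))"

lemma lookup_mon_push_image:
  assumes "inj f"
  shows "lookup (mon_push f a) (f v) = lookup a v"
proof -
  have "lookup (mon_push f a) (f v) = (\<Sum>u\<in>keys a. (lookup a u when f u = f v))"
    by (simp add: mon_push_def lookup_sum lookup_single)
  also have "\<dots> = (\<Sum>u\<in>keys a. (if u = v then lookup a u else 0))"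
    by (rule sum.cong) (auto simp: when_def dest: injD[OF assms])
  also have "\<dots> = lookup a v" by (simp add: in_keys_iff)
  finally show ?thesis .
qed

lemma lookup_mon_push_outside: "w \<notin> range f \<Longrightarrow> lookup (mon_push f a) w = 0"
  by (auto simp: mon_push_def lookup_sum lookup_single when_def intro!: sum.neutral)

lemma keys_mon_push: "keys (mon_push f a) \<subseteq> range f"
  using lookup_mon_push_outside by (fastforce simp: in_keys_iff)

lemma keys_add_subset_iff: "keys (a + b :: 'v mon) \<subseteq> S \<longleftrightarrow> keys a \<subseteq> S \<and> keys b \<subseteq> S"
  by (fastforce simp: in_keys_iff lookup_add subset_iff)

lemma mon_push_0 [simp]: "mon_push f 0 = 0"
  by (simp add: mon_push_def)

lemma mon_push_add: "inj f \<Longrightarrow> mon_push f (a + b) = mon_push f a + mon_push f b"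
  by (rule poly_mapping_eqI, rename_tac w, case_tac "w \<in> range f")
    (auto simp: lookup_add lookup_mon_push_image lookup_mon_push_outside)

lemma mon_push_single: "inj f \<Longrightarrow> mon_push f (single v k) = single (f v) k"
  by (rule poly_mapping_eqI, rename_tac w, case_tac "w \<in> range f")
    (auto simp: lookup_mon_push_image lookup_mon_push_outside lookup_single when_def dest: injD)

lemma map_key_mon_push: "inj f \<Longrightarrow> Poly_Mapping.map_key f (mon_push f a) = a"
  by (rule poly_mapping_eqI) (simp add: map_key.rep_eq lookup_mon_push_image)

lemma mon_push_map_key:
  assumes "inj f" "keys m \<subseteq> range f"
  shows "mon_push f (Poly_Mapping.map_key f m) = m"
proof (rule poly_mapping_eqI)
  fix w
  show "lookup (mon_push f (Poly_Mapping.map_key f m)) w = lookup m w"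
    using assms by (cases "w \<in> range f")
      (auto simp: map_key.rep_eq lookup_mon_push_image lookup_mon_push_outside in_keys_iff)
qed

definition mon_weight :: "('v \<Rightarrow> nat) \<Rightarrow> 'v mon \<Rightarrow> nat" where
  "mon_weight g a = (\<Sum>v\<in>keys a. lookup a v * g v)"

abbreviation mon_degree :: "'v mon \<Rightarrow> nat" where
  "mon_degree \<equiv> mon_weight (\<lambda>_. 1)"

lemma mon_weight_superset:
  "finite K \<Longrightarrow> keys a \<subseteq> K \<Longrightarrow> mon_weight g a = (\<Sum>v\<in>K. lookup a v * g v)"
  unfolding mon_weight_def by (rule sum.mono_neutral_left) (auto simp: in_keys_iff)

lemma mon_weight_add: "mon_weight g (a + b) = mon_weight g a + mon_weight g b"
proof -
  let ?K = "keys a \<union> keys b"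
  have "mon_weight g (a + b) = (\<Sum>v\<in>?K. lookup (a + b) v * g v)"
    by (rule mon_weight_superset) (use keys_add[of a b] in auto)
  also have "\<dots> = (\<Sum>v\<in>?K. lookup a v * g v) + (\<Sum>v\<in>?K. lookup b v * g v)"
    by (simp add: lookup_add sum.distrib algebra_simps)
  also have "\<dots> = mon_weight g a + mon_weight g b"
    using mon_weight_superset[of ?K a g] mon_weight_superset[of ?K b g] by simp
  finally show ?thesis .
qed

lemma mon_weight_0 [simp]: "mon_weight g 0 = 0"
  by (simp add: mon_weight_def)

lemma mon_weight_single: "mon_weight g (single v k) = k * g v"
  by (cases "k = 0") (simp_all add: mon_weight_def)

lemma mon_weight_mon_push:
  assumes "inj f"
  shows "mon_weight g (mon_push f a) = mon_weight (g \<circ> f) a"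
proof -
  have "keys (mon_push f a) \<subseteq> f ` keys a"
    using keys_mon_push[of f a] by (auto simp: in_keys_iff lookup_mon_push_image[OF assms])
  then have "mon_weight g (mon_push f a) = (\<Sum>w\<in>f ` keys a. lookup (mon_push f a) w * g w)"
    by (simp add: mon_weight_superset)
  also have "\<dots> = (\<Sum>v\<in>keys a. lookup a v * g (f v))"
    by (simp add: sum.reindex inj_on_subset[OF assms] lookup_mon_push_image[OF assms])
  finally show ?thesis by (simp add: mon_weight_def)
qed

text \<open>The coefficient series of the substitution \<open>x\<^sub>v \<mapsto> e \<cdot> y\<^sub>f\<^sub>(\<^sub>v\<^sub>)\<close>.\<close>

definition ser_rename :: "('a \<Rightarrow> 'b) \<Rightarrow> complex \<Rightarrow> 'a ser \<Rightarrow> 'b ser" where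
  "ser_rename f e g = (\<lambda>m. if keys m \<subseteq> range f
     then e ^ mon_degree (Poly_Mapping.map_key f m) * g (Poly_Mapping.map_key f m) else 0)"

lemma sum_mon_splits_map_key:
  fixes \<phi> :: "'b mon \<Rightarrow> 'b mon \<Rightarrow> 'c :: comm_monoid_add"
  assumes inj: "inj f" and m: "keys m \<subseteq> range f"
  shows "(\<Sum>(p, q)\<in>{(p, q). p + q = Poly_Mapping.map_key f m}. \<phi> (mon_push f p) (mon_push f q)) =
    (\<Sum>(m1, m2)\<in>{(a, b). a + b = m}. \<phi> m1 m2)"
proof (rule sum.reindex_bij_witness[where j = "\<lambda>(p, q). (mon_push f p, mon_push f q)"
      and i = "\<lambda>(m1, m2). (Poly_Mapping.map_key f m1, Poly_Mapping.map_key f m2)"])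
  fix b assume "b \<in> {(p, q). p + q = Poly_Mapping.map_key f m}"
  then obtain p q where b: "b = (p, q)" "p + q = Poly_Mapping.map_key f m" by auto
  have "mon_push f p + mon_push f q = m"
    using b by (simp add: mon_push_add[OF inj, symmetric] mon_push_map_key[OF inj m])
  then show "(case b of (p, q) \<Rightarrow> (mon_push f p, mon_push f q)) \<in> {(a, b). a + b = m}"
    using b by simp
next
  fix a assume "a \<in> {(a, b). a + b = m}"
  then obtain m1 m2 where a: "a = (m1, m2)" "m1 + m2 = m" by auto
  then have "keys m1 \<subseteq> range f" "keys m2 \<subseteq> range f"
    using m keys_add_subset_iff[of m1 m2 "range f"] by simp_all
  then show "(case case a of (m1, m2) \<Rightarrow> (Poly_Mapping.map_key f m1, Poly_Mapping.map_key f m2) of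
      (p, q) \<Rightarrow> (mon_push f p, mon_push f q)) = a"
    using a by (simp add: mon_push_map_key inj)
  show "(case a of (m1, m2) \<Rightarrow> (Poly_Mapping.map_key f m1, Poly_Mapping.map_key f m2)) \<in>
      {(p, q). p + q = Poly_Mapping.map_key f m}"
    using a by (simp add: map_key_plus[OF inj, symmetric])
qed (auto simp: map_key_mon_push inj)

lemma ser_rename_mult:
  assumes inj: "inj f"
  shows "ser_rename f e (ser_mult g h) = ser_mult (ser_rename f e g) (ser_rename f e h)"
proof
  fix m
  show "ser_rename f e (ser_mult g h) m = ser_mult (ser_rename f e g) (ser_rename f e h) m"
  proof (cases "keys m \<subseteq> range f")
    case False
    have "ser_rename f e g p * ser_rename f e h q = 0" if "p + q = m" for p q
      using False that keys_add_subset_iff[of p q "range f"] by (auto simp: ser_rename_def)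
    then show ?thesis
      using False by (auto simp: ser_rename_def ser_mult_def intro!: sum.neutral)
  next
    case True
    let ?c = "Poly_Mapping.map_key f m"
    have "ser_rename f e (ser_mult g h) m = e ^ mon_degree ?c * (\<Sum>(p, q)\<in>{(p, q). p + q = ?c}. g p * h q)"
      using True by (simp add: ser_rename_def ser_mult_def)
    also have "\<dots> = (\<Sum>(p, q)\<in>{(p, q). p + q = ?c}.
        ser_rename f e g (mon_push f p) * ser_rename f e h (mon_push f q))"
      unfolding sum_distrib_left
    proof (rule sum.cong[OF refl])
      fix x assume "x \<in> {(p, q). p + q = ?c}"
      then obtain p q where "x = (p, q)" "?c = p + q" by auto
      then show "e ^ mon_degree ?c * (case x of (p, q) \<Rightarrow> g p * h q) =
          (case x of (p, q) \<Rightarrow> ser_rename f e g (mon_push f p) * ser_rename f e h (mon_push f q))"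
        by (simp add: ser_rename_def keys_mon_push map_key_mon_push inj mon_weight_add power_add)
    qed
    also have "\<dots> = ser_mult (ser_rename f e g) (ser_rename f e h) m"
      unfolding ser_mult_def by (rule sum_mon_splits_map_key[OF inj True])
    finally show ?thesis .
  qed
qed

lemma ser_rename_one:
  assumes "inj f"
  shows "ser_rename f e ser_one = ser_one"
proof
  fix m
  show "ser_rename f e ser_one m = ser_one m"
  proof (cases "keys m \<subseteq> range f")
    case True
    then have "Poly_Mapping.map_key f m = 0 \<longleftrightarrow> m = 0"
      by (metis assms map_key_zero mon_push_map_key mon_push_0)
    then show ?thesis using True by (simp add: ser_rename_def ser_one_def ser_const_def map_key_zero[OF assms])
  next
    case False
    then have "m \<noteq> 0" by auto
    then show ?thesis using False by (simp add: ser_rename_def ser_one_def ser_const_def)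
  qed
qed

definition mfps_rename :: "('a \<Rightarrow> 'b) \<Rightarrow> complex \<Rightarrow> 'a mfps \<Rightarrow> 'b mfps" where
  "mfps_rename f e x = mfps (ser_rename f e (coeffs x))"

lemma coeffs_mfps_rename: "coeffs (mfps_rename f e x) = ser_rename f e (coeffs x)"
  by (simp add: mfps_rename_def mfps_inverse)

lemma comm_ring_hom_mfps_rename:
  assumes "inj f"
  shows "comm_ring_hom (mfps_rename f e)"
proof
  fix x y
  show "mfps_rename f e (x + y) = mfps_rename f e x + mfps_rename f e y"
    by (rule coeffs_inject[THEN iffD1])
      (simp add: coeffs_mfps_rename ser_rename_def plus_mfps.rep_eq fun_eq_iff algebra_simps)
  show "mfps_rename f e (x * y) = mfps_rename f e x * mfps_rename f e y"
    by (rule coeffs_inject[THEN iffD1]) (simp add: coeffs_mfps_rename coeffs_times ser_rename_mult assms)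
  show "mfps_rename f e 0 = 0"
    by (rule coeffs_inject[THEN iffD1]) (simp add: coeffs_mfps_rename coeffs_zero ser_rename_def fun_eq_iff)
  show "mfps_rename f e 1 = 1"
    by (rule coeffs_inject[THEN iffD1]) (simp add: coeffs_mfps_rename coeffs_one ser_rename_one assms)
qed

lemma mfps_rename_monom:
  assumes "inj f"
  shows "mfps_rename f e (mfps_monom p) = mfps_const (e ^ mon_degree p) * mfps_monom (mon_push f p)"
proof (rule coeffs_inject[THEN iffD1], rule ext)
  fix m
  have "m = mon_push f p \<longleftrightarrow> keys m \<subseteq> range f \<and> Poly_Mapping.map_key f m = p"
    using keys_mon_push map_key_mon_push mon_push_map_key assms by metis
  then show "coeffs (mfps_rename f e (mfps_monom p)) m = coeffs (mfps_const (e ^ mon_degree p) * mfps_monom (mon_push f p)) m"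
    by (auto simp: coeffs_mfps_rename ser_rename_def coeffs_mfps_monom)
qed

lemma ser_subst_eq_rename:
  fixes f :: "nat \<Rightarrow> 'b"
  assumes inj: "inj f" and \<sigma>: "\<And>v. \<sigma> v = coeffs (mfps_const e * mfps_monom (single (f v) 1))"
  shows "ser_subst \<sigma> g = ser_rename f e g"
proof
  fix m :: "'b mon"
  let ?c = "Poly_Mapping.map_key f m"
  have monom: "ser_monom \<sigma> a = coeffs (mfps_rename f e (mfps_monom a))" for a
  proof -
    have "ser_monom \<sigma> a = coeffs (\<Prod>v\<in>keys a. (mfps_const e * mfps_monom (single (f v) 1)) ^ lookup a v)"
      unfolding ser_monom_def ser_prod_list_eq ser_pow_eq \<sigma>
      by (simp add: coeffs_inverse o_def prod.distinct_set_conv_list[symmetric])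
    also have "(\<Prod>v\<in>keys a. (mfps_const e * mfps_monom (single (f v) 1)) ^ lookup a v) =
        (\<Prod>v\<in>keys a. mfps_const (e ^ lookup a v) * mfps_monom (single (f v) (lookup a v)))"
      by (simp add: power_mult_distrib mfps_monom_single_power[simplified] mfps_const.hom_power)
    also have "\<dots> = mfps_rename f e (mfps_monom a)"
      by (simp add: prod.distrib prod_mfps_monom mfps_const.hom_prod[symmetric] power_sum[symmetric]
          mon_push_def mon_weight_def mfps_rename_monom inj)
    finally show ?thesis .
  qed
  have "ser_subst \<sigma> g m = (\<Sum>\<^sub>\<infinity>a. g a * coeffs (mfps_rename f e (mfps_monom a)) m)"
    by (simp add: ser_subst_def ser_sum_def ser_scale_def monom)
  also have "\<dots> = g ?c * coeffs (mfps_rename f e (mfps_monom ?c)) m"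
    by (subst infsum_eq_single_support[where x = ?c])
      (auto simp: coeffs_mfps_rename ser_rename_def coeffs_mfps_monom)
  also have "\<dots> = ser_rename f e g m"
    by (auto simp: coeffs_mfps_rename ser_rename_def coeffs_mfps_monom)
  finally show "ser_subst \<sigma> g m = ser_rename f e g m" .
qed

lemma ser_subst_t_vars: "ser_subst t_vars g = ser_rename Inl 1 g"
  by (rule ser_subst_eq_rename) (simp_all add: t_vars_def ser_var_eq mfps_const.hom_one)

lemma ser_subst_neg_s_vars: "ser_subst neg_s_vars g = ser_rename Inr (-1) g"
  by (rule ser_subst_eq_rename)
    (simp_all add: neg_s_vars_def ser_var_eq ser_neg_eq coeffs_inverse mfps_const.hom_uminus)

section \<open>Coefficients in \<open>z\<close> and Toeplitz matrices\<close>

definition z_coeff :: "int \<Rightarrow> nat ser \<Rightarrow> nat ser" where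
  "z_coeff d F = (if d < 0 then ser_zero
     else (\<lambda>c. if lookup c 0 = 0 then F (c + single 0 (nat d)) else 0))"

lemma schur_p_eq_z_coeff: "schur_p d = z_coeff d gen_series"
  by (simp add: schur_p_def z_coeff_def)

lemma z_coeff_one: "z_coeff d ser_one = (if d = 0 then ser_one else ser_zero)"
proof -
  have "c + single 0 (nat d) \<noteq> 0" if "d > 0" for c :: "nat mon"
  proof
    assume "c + single 0 (nat d) = 0"
    then have "lookup (c + single 0 (nat d)) 0 = 0" by simp
    then show False using that by (simp add: lookup_add)
  qed
  then show ?thesis
    by (auto simp: z_coeff_def ser_one_def ser_const_def fun_eq_iff)
qed

lemma sum_mon_splits_shift_z:
  fixes c :: "nat mon" and \<phi> :: "nat mon \<Rightarrow> nat mon \<Rightarrow> 'a :: comm_monoid_add"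
  assumes c0: "lookup c 0 = 0"
  shows "(\<Sum>(e, p, q)\<in>Sigma {0..d} (\<lambda>_. {(p, q). p + q = c \<and> lookup p 0 = 0 \<and> lookup q 0 = 0}).
            \<phi> (p + single 0 e) (q + single 0 (d - e))) =
         (\<Sum>(P, Q)\<in>{(P, Q). P + Q = c + single 0 d}. \<phi> P Q)"
proof (rule sum.reindex_bij_witness[where j = "\<lambda>(e, p, q). (p + single 0 e, q + single 0 (d - e))"
      and i = "\<lambda>(P, Q). (lookup P 0, P - single 0 (lookup P 0), Q - single 0 (lookup Q 0))"])
  fix a assume "a \<in> Sigma {0..d} (\<lambda>_. {(p, q). p + q = c \<and> lookup p 0 = 0 \<and> lookup q 0 = 0})"
  then obtain e p q where a: "a = (e, p, q)" "e \<le> d" "p + q = c" "lookup p 0 = 0" "lookup q 0 = 0"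
    by auto
  show "(case case a of (e, p, q) \<Rightarrow> (p + single 0 e, q + single 0 (d - e)) of
      (P, Q) \<Rightarrow> (lookup P 0, P - single 0 (lookup P 0), Q - single 0 (lookup Q 0))) = a"
    using a by (simp add: lookup_add)
  have "p + single 0 e + (q + single 0 (d - e)) = (p + q) + (single 0 e + single 0 (d - e))"
    by (simp add: add_ac)
  also have "single 0 e + single 0 (d - e) = single 0 d"
    using a(2) by (simp add: single_add[symmetric])
  finally show "(case a of (e, p, q) \<Rightarrow> (p + single 0 e, q + single 0 (d - e))) \<in>
      {(P, Q). P + Q = c + single 0 d}"
    using a by simp
next
  fix b assume "b \<in> {(P, Q). P + Q = c + single 0 d}"
  then obtain P Q where b: "b = (P, Q)" "P + Q = c + single 0 d" by auto
  have d: "lookup P 0 + lookup Q 0 = d"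
    using arg_cong[OF b(2), of "\<lambda>x. lookup x 0"] c0 by (simp add: lookup_add)
  have "lookup P v + lookup Q v = lookup c v" if "v \<noteq> 0" for v
    using arg_cong[OF b(2), of "\<lambda>x. lookup x v"] that by (simp add: lookup_add lookup_single)
  then have "P - single 0 (lookup P 0) + (Q - single 0 (lookup Q 0)) = c"
    using c0 by (intro poly_mapping_eqI, rename_tac v, case_tac "v = 0")
      (auto simp: lookup_add lookup_minus lookup_single)
  then show "(case b of (P, Q) \<Rightarrow> (lookup P 0, P - single 0 (lookup P 0), Q - single 0 (lookup Q 0))) \<in>
      Sigma {0..d} (\<lambda>_. {(p, q). p + q = c \<and> lookup p 0 = 0 \<and> lookup q 0 = 0})"
    using b d by (auto simp: lookup_minus)
  have "P - single 0 (lookup P 0) + single 0 (lookup P 0) = P"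
    by (rule poly_mapping_eqI) (simp add: lookup_add lookup_minus lookup_single when_def)
  moreover have "Q - single 0 (lookup Q 0) + single 0 (d - lookup P 0) = Q"
    using d by (intro poly_mapping_eqI) (auto simp: lookup_add lookup_minus lookup_single when_def)
  ultimately show "(case case b of (P, Q) \<Rightarrow> (lookup P 0, P - single 0 (lookup P 0), Q - single 0 (lookup Q 0)) of
      (e, p, q) \<Rightarrow> (p + single 0 e, q + single 0 (d - e))) = b"
    using b by simp
qed auto

lemma z_coeff_mult:
  "mfps (z_coeff (int d) (ser_mult F G)) =
    (\<Sum>e\<in>{0..d}. mfps (z_coeff (int e) F) * mfps (z_coeff (int (d - e)) G))"
proof (rule coeffs_inject[THEN iffD1], rule ext)
  fix c :: "nat mon"
  let ?S = "{(p, q). p + q = c \<and> lookup p 0 = 0 \<and> lookup q 0 = 0}"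
  have rhs: "coeffs (\<Sum>e\<in>{0..d}. mfps (z_coeff (int e) F) * mfps (z_coeff (int (d - e)) G)) c =
      (\<Sum>e\<in>{0..d}. \<Sum>(p, q)\<in>{(p, q). p + q = c}. z_coeff (int e) F p * z_coeff (int (d - e)) G q)"
    by (simp add: coeffs_times ser_mult_def mfps_inverse)
  show "coeffs (mfps (z_coeff (int d) (ser_mult F G))) c =
      coeffs (\<Sum>e\<in>{0..d}. mfps (z_coeff (int e) F) * mfps (z_coeff (int (d - e)) G)) c"
  proof (cases "lookup c 0 = 0")
    case False
    then show ?thesis
      unfolding rhs by (auto simp: mfps_inverse z_coeff_def lookup_add intro!: sum.neutral)
  next
    case True
    have "(\<Sum>e\<in>{0..d}. \<Sum>(p, q)\<in>{(p, q). p + q = c}. z_coeff (int e) F p * z_coeff (int (d - e)) G q) =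
        (\<Sum>e\<in>{0..d}. \<Sum>(p, q)\<in>?S. F (p + single 0 e) * G (q + single 0 (d - e)))"
      by (intro sum.cong[OF refl] sum.mono_neutral_cong_right)
        (auto simp: finite_mon_splits z_coeff_def nat_diff_distrib split: if_splits)
    also have "\<dots> = (\<Sum>(e, p, q)\<in>Sigma {0..d} (\<lambda>_. ?S). F (p + single 0 e) * G (q + single 0 (d - e)))"
      by (subst sum.Sigma) (auto intro: finite_subset[OF _ finite_mon_splits])
    also have "\<dots> = (\<Sum>(P, Q)\<in>{(P, Q). P + Q = c + single 0 d}. F P * G Q)"
      by (rule sum_mon_splits_shift_z[OF True])
    finally show ?thesis
      unfolding rhs using True by (simp add: mfps_inverse z_coeff_def ser_mult_def)
  qed
qed

definition renamed_z_coeff :: "(nat \<Rightarrow> 'b) \<Rightarrow> complex \<Rightarrow> nat ser \<Rightarrow> int \<Rightarrow> 'b mfps" where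
  "renamed_z_coeff f e F d = mfps_rename f e (mfps (z_coeff d F))"

lemma renamed_z_coeff_neg: "d < 0 \<Longrightarrow> renamed_z_coeff f e F d = 0"
  by (rule coeffs_inject[THEN iffD1])
    (simp add: renamed_z_coeff_def z_coeff_def coeffs_mfps_rename mfps_inverse ser_rename_def coeffs_zero fun_eq_iff)

lemma renamed_z_coeff_one:
  assumes "inj f"
  shows "renamed_z_coeff f e ser_one d = (if d = 0 then 1 else 0)"
proof -
  interpret comm_ring_hom "mfps_rename f e" by (rule comm_ring_hom_mfps_rename[OF assms])
  show ?thesis by (simp add: renamed_z_coeff_def z_coeff_one mfps_ser_zero mfps_ser_one)
qed

lemma renamed_z_coeff_mult:
  assumes "inj f"
  shows "renamed_z_coeff f e (ser_mult F G) (int d) =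
    (\<Sum>k\<in>{0..d}. renamed_z_coeff f e F (int k) * renamed_z_coeff f e G (int (d - k)))"
proof -
  interpret comm_ring_hom "mfps_rename f e" by (rule comm_ring_hom_mfps_rename[OF assms])
  show ?thesis by (simp add: renamed_z_coeff_def z_coeff_mult hom_sum hom_mult)
qed

lemma coeffs_renamed_z_coeff:
  "coeffs (renamed_z_coeff f e F d) m =
    (if keys m \<subseteq> range f \<and> 0 \<le> d \<and> lookup (Poly_Mapping.map_key f m) 0 = 0
     then e ^ mon_degree (Poly_Mapping.map_key f m) * F (Poly_Mapping.map_key f m + single 0 (nat d)) else 0)"
  by (simp add: renamed_z_coeff_def coeffs_mfps_rename mfps_inverse ser_rename_def z_coeff_def)

lemma coeffs_renamed_z_coeff_ser_sum:
  "coeffs (renamed_z_coeff f e (ser_sum G I) d) m = (\<Sum>\<^sub>\<infinity>i\<in>I. coeffs (renamed_z_coeff f e (G i) d) m)"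
proof (cases "keys m \<subseteq> range f \<and> 0 \<le> d \<and> lookup (Poly_Mapping.map_key f m) 0 = 0")
  case True
  then show ?thesis by (simp add: coeffs_renamed_z_coeff ser_sum_def infsum_cmult_right')
next
  case False
  then show ?thesis by (simp only: coeffs_renamed_z_coeff if_False infsum_0_simp)
qed

lemma coeffs_renamed_z_coeff_scale:
  "coeffs (renamed_z_coeff f e (ser_scale c F) d) m = c * coeffs (renamed_z_coeff f e F d) m"
  by (simp add: coeffs_renamed_z_coeff ser_scale_def)

definition upper_toeplitz :: "(int \<Rightarrow> (nat + nat) mfps) \<Rightarrow> smat" where
  "upper_toeplitz X = (\<lambda>a b. coeffs (X (int b - int a)))"

definition lower_toeplitz :: "(int \<Rightarrow> (nat + nat) mfps) \<Rightarrow> smat" where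
  "lower_toeplitz X = (\<lambda>a b. coeffs (X (int a - int b)))"

lemma smat_mult_finite_support:
  assumes "finite K" "\<And>k. k \<notin> K \<Longrightarrow> x k * y k = 0"
  shows "ser_sum (\<lambda>k. ser_mult (coeffs (x k)) (coeffs (y k))) UNIV = coeffs (\<Sum>k\<in>K. x k * y k)"
proof
  fix m
  have "ser_sum (\<lambda>k. ser_mult (coeffs (x k)) (coeffs (y k))) UNIV m = (\<Sum>\<^sub>\<infinity>k. coeffs (x k * y k) m)"
    by (simp add: ser_sum_def coeffs_times)
  also have "\<dots> = (\<Sum>k\<in>K. coeffs (x k * y k) m)"
    by (subst infsum_eq_sum_support[where S = K]) (auto simp: assms)
  finally show "ser_sum (\<lambda>k. ser_mult (coeffs (x k)) (coeffs (y k))) UNIV m = coeffs (\<Sum>k\<in>K. x k * y k) m"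
    by simp
qed

lemma smat_mult_upper_toeplitz:
  assumes "inj f"
  shows "smat_mult (upper_toeplitz (renamed_z_coeff f e F)) (upper_toeplitz (renamed_z_coeff f e G)) =
    upper_toeplitz (renamed_z_coeff f e (ser_mult F G))"
proof (rule ext, rule ext)
  fix a b
  let ?r = "renamed_z_coeff f e"
  have "smat_mult (upper_toeplitz (?r F)) (upper_toeplitz (?r G)) a b =
      coeffs (\<Sum>k\<in>{a..b}. ?r F (int k - int a) * ?r G (int b - int k))"
    unfolding smat_mult_def upper_toeplitz_def
    by (rule smat_mult_finite_support) (auto simp: not_le renamed_z_coeff_neg)
  also have "(\<Sum>k\<in>{a..b}. ?r F (int k - int a) * ?r G (int b - int k)) = ?r (ser_mult F G) (int b - int a)"
  proof (cases "a \<le> b")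
    case True
    then obtain d where b: "b = a + d" using le_Suc_ex by blast
    have "(\<Sum>k\<in>{a..b}. ?r F (int k - int a) * ?r G (int b - int k)) =
        (\<Sum>k\<in>{0..d}. ?r F (int k) * ?r G (int (d - k)))"
      unfolding b using sum.shift_bounds_cl_nat_ivl[of "\<lambda>k. ?r F (int k - int a) * ?r G (int (a + d) - int k)" 0 a d]
      by (simp add: algebra_simps of_nat_diff)
    also have "\<dots> = ?r (ser_mult F G) (int b - int a)"
      using b by (simp add: renamed_z_coeff_mult[OF assms])
    finally show ?thesis .
  qed (simp add: renamed_z_coeff_neg)
  finally show "smat_mult (upper_toeplitz (?r F)) (upper_toeplitz (?r G)) a b =
      upper_toeplitz (?r (ser_mult F G)) a b"
    by (simp add: upper_toeplitz_def)
qed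

lemma smat_mult_lower_toeplitz:
  assumes "inj f"
  shows "smat_mult (lower_toeplitz (renamed_z_coeff f e F)) (lower_toeplitz (renamed_z_coeff f e G)) =
    lower_toeplitz (renamed_z_coeff f e (ser_mult F G))"
proof (rule ext, rule ext)
  fix a b
  let ?r = "renamed_z_coeff f e"
  have "smat_mult (lower_toeplitz (?r F)) (lower_toeplitz (?r G)) a b =
      smat_mult (upper_toeplitz (?r G)) (upper_toeplitz (?r F)) b a"
    by (simp add: smat_mult_def lower_toeplitz_def upper_toeplitz_def ser_mult_commute)
  also have "\<dots> = upper_toeplitz (?r (ser_mult G F)) b a"
    by (simp only: smat_mult_upper_toeplitz[OF assms])
  also have "\<dots> = lower_toeplitz (?r (ser_mult F G)) a b"
    by (simp add: upper_toeplitz_def lower_toeplitz_def ser_mult_commute)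
  finally show "smat_mult (lower_toeplitz (?r F)) (lower_toeplitz (?r G)) a b =
      lower_toeplitz (?r (ser_mult F G)) a b" .
qed

lemma smat_pow_upper_toeplitz:
  assumes "inj f"
  shows "smat_pow (upper_toeplitz (renamed_z_coeff f e F)) k = upper_toeplitz (renamed_z_coeff f e (ser_pow F k))"
proof (induction k)
  case 0
  show ?case
    by (auto simp: smat_pow_def ser_pow_def smat_one_def upper_toeplitz_def renamed_z_coeff_one[OF assms]
        coeffs_one coeffs_zero fun_eq_iff)
next
  case (Suc k)
  then show ?case by (simp add: smat_pow_def ser_pow_def smat_mult_upper_toeplitz[OF assms])
qed

lemma smat_pow_lower_toeplitz:
  assumes "inj f"
  shows "smat_pow (lower_toeplitz (renamed_z_coeff f e F)) k = lower_toeplitz (renamed_z_coeff f e (ser_pow F k))"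
proof (induction k)
  case 0
  show ?case
    by (auto simp: smat_pow_def ser_pow_def smat_one_def lower_toeplitz_def renamed_z_coeff_one[OF assms]
        coeffs_one coeffs_zero fun_eq_iff)
next
  case (Suc k)
  then show ?case by (simp add: smat_pow_def ser_pow_def smat_mult_lower_toeplitz[OF assms])
qed

lemma smat_exp_upper_toeplitz:
  assumes "inj f"
  shows "smat_exp (upper_toeplitz (renamed_z_coeff f e F)) = upper_toeplitz (renamed_z_coeff f e (ser_exp F))"
proof (intro ext)
  fix a b m
  show "smat_exp (upper_toeplitz (renamed_z_coeff f e F)) a b m =
      upper_toeplitz (renamed_z_coeff f e (ser_exp F)) a b m"
    unfolding smat_exp_def smat_pow_upper_toeplitz[OF assms] unfolding upper_toeplitz_def ser_exp_def
      coeffs_renamed_z_coeff_ser_sum coeffs_renamed_z_coeff_scale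
    by (simp add: ser_sum_def ser_scale_def)
qed

lemma smat_exp_lower_toeplitz:
  assumes "inj f"
  shows "smat_exp (lower_toeplitz (renamed_z_coeff f e F)) = lower_toeplitz (renamed_z_coeff f e (ser_exp F))"
proof (intro ext)
  fix a b m
  show "smat_exp (lower_toeplitz (renamed_z_coeff f e F)) a b m =
      lower_toeplitz (renamed_z_coeff f e (ser_exp F)) a b m"
    unfolding smat_exp_def smat_pow_lower_toeplitz[OF assms] unfolding lower_toeplitz_def ser_exp_def
      coeffs_renamed_z_coeff_ser_sum coeffs_renamed_z_coeff_scale
    by (simp add: ser_sum_def ser_scale_def)
qed

section \<open>The matrices \<open>exp(\<Sigma> t\<^sub>i \<Lambda>\<^sup>i)\<close> and \<open>exp(-\<Sigma> s\<^sub>i (\<Lambda>\<^sup>T)\<^sup>i)\<close>\<close>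

definition gen_exponent :: "nat ser" where
  "gen_exponent = ser_sum (\<lambda>i. ser_mult (ser_var i) (ser_pow (ser_var 0) i)) {1..}"

lemma gen_series_eq_exp: "gen_series = ser_exp gen_exponent"
  by (simp add: gen_series_def gen_exponent_def)

lemma gen_exponent_term: "ser_mult (ser_var i) (ser_pow (ser_var 0) i) = coeffs (mfps_monom (single i 1 + single 0 i))"
  by (simp add: ser_var_eq ser_pow_eq coeffs_inverse mfps_monom_single_power[simplified] coeffs_times[symmetric]
      mfps_monom_mult)

lemma gen_exponent_apply: "gen_exponent x = (if \<exists>i\<ge>1. x = single i 1 + single 0 i then 1 else 0)"
proof -
  have "gen_exponent x = (\<Sum>\<^sub>\<infinity>i\<in>{1..}. if x = single i 1 + single 0 i then 1 else 0)"
    by (simp add: gen_exponent_def ser_sum_def gen_exponent_term coeffs_mfps_monom)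
  also have "\<dots> = (if lookup x 0 \<in> {1..} then (if x = single (lookup x 0) 1 + single 0 (lookup x 0) then 1 else 0) else 0)"
    by (rule infsum_eq_single_support) (auto simp: lookup_add lookup_single when_def)
  also have "\<dots> = (if \<exists>i\<ge>1. x = single i 1 + single 0 i then 1 else 0)"
    by (auto simp: lookup_add lookup_single when_def)
  finally show ?thesis .
qed

lemma z_coeff_gen_exponent: "z_coeff d gen_exponent = (if 1 \<le> d then ser_var (nat d) else ser_zero)"
proof (rule ext)
  fix c :: "nat mon"
  show "z_coeff d gen_exponent c = (if 1 \<le> d then ser_var (nat d) else ser_zero) c"
  proof (cases "d < 0 \<or> lookup c 0 \<noteq> 0")
    case True
    then show ?thesis
      by (auto simp: z_coeff_def ser_var_def lookup_single when_def)
  next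
    case False
    have "(\<exists>i\<ge>1. c + single 0 (nat d) = single i 1 + single 0 i) \<longleftrightarrow> 1 \<le> d \<and> c = single (nat d) 1"
    proof
      assume "\<exists>i\<ge>1. c + single 0 (nat d) = single i 1 + single 0 i"
      then obtain i where i: "1 \<le> i" "c + single 0 (nat d) = single i 1 + single 0 i" by blast
      have "nat d = i"
        using arg_cong[OF i(2), of "\<lambda>x. lookup x 0"] i(1) False by (simp add: lookup_add lookup_single when_def)
      then show "1 \<le> d \<and> c = single (nat d) 1"
        using i False by auto
    qed (rule exI[of _ "nat d"], auto)
    then show ?thesis
      using False by (simp add: z_coeff_def gen_exponent_apply ser_var_def)
  qed
qed

lemma renamed_z_coeff_gen_exponent:
  assumes "inj f"
  shows "renamed_z_coeff f e gen_exponent d =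
    (if 1 \<le> d then mfps_const e * mfps_monom (single (f (nat d)) 1) else 0)"
proof -
  interpret comm_ring_hom "mfps_rename f e" by (rule comm_ring_hom_mfps_rename[OF assms])
  show ?thesis
    by (simp add: renamed_z_coeff_def z_coeff_gen_exponent ser_var_eq coeffs_inverse mfps_rename_monom
        mon_push_single mon_weight_single mfps_ser_zero assms)
qed

lemma smat_pow_shift: "smat_pow shift i a b = (if b = a + i then ser_one else ser_zero)"
proof (induction i arbitrary: a)
  case 0
  then show ?case by (simp add: smat_pow_def smat_one_def)
next
  case (Suc i)
  have "smat_pow shift (Suc i) a b m = ser_mult (shift a (Suc a)) (smat_pow shift i (Suc a) b) m" for m
    unfolding smat_pow_def smat_mult_def funpow.simps o_apply ser_sum_def
    by (subst infsum_eq_single_support[where x = "Suc a"]) (auto simp: shift_def smat_pow_def)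
  then show ?case using Suc by (simp add: shift_def fun_eq_iff)
qed

lemma smat_pow_shiftT: "smat_pow shiftT i a b = (if a = b + i then ser_one else ser_zero)"
proof (induction i arbitrary: a)
  case 0
  then show ?case by (auto simp: smat_pow_def smat_one_def)
next
  case (Suc i)
  show ?case
  proof (cases a)
    case 0
    then show ?thesis
      by (simp add: smat_pow_def smat_mult_def ser_sum_def shiftT_def shift_def fun_eq_iff)
  next
    case (Suc a')
    have "smat_pow shiftT (Suc i) a b m = ser_mult (shiftT a a') (smat_pow shiftT i a' b) m" for m
      unfolding smat_pow_def smat_mult_def funpow.simps o_apply ser_sum_def
      by (subst infsum_eq_single_support[where x = a']) (auto simp: shiftT_def shift_def smat_pow_def Suc)
    then show ?thesis using Suc.IH[of a'] by (simp add: shiftT_def shift_def Suc fun_eq_iff)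
  qed
qed

lemma t_flow_eq: "t_flow = upper_toeplitz (renamed_z_coeff Inl 1 gen_exponent)"
proof (intro ext)
  fix a b m
  have "t_flow a b m = (\<Sum>\<^sub>\<infinity>i\<in>{1..}. if b = a + i then ser_var (Inl i) m else 0)"
    unfolding t_flow_def ser_sum_def smat_pow_shift by (intro infsum_cong) simp
  also have "\<dots> = (if a < b then ser_var (Inl (b - a)) m else 0)"
    by (subst infsum_eq_single_support[where x = "b - a"]) auto
  also have "\<dots> = upper_toeplitz (renamed_z_coeff Inl 1 gen_exponent) a b m"
    by (auto simp: upper_toeplitz_def renamed_z_coeff_gen_exponent ser_var_eq nat_diff_distrib
        mfps_const.hom_one)
  finally show "t_flow a b m = upper_toeplitz (renamed_z_coeff Inl 1 gen_exponent) a b m" .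
qed

lemma s_flow_eq: "s_flow = lower_toeplitz (renamed_z_coeff Inr (-1) gen_exponent)"
proof (intro ext)
  fix a b m
  have "s_flow a b m = - (\<Sum>\<^sub>\<infinity>i\<in>{1..}. if a = b + i then ser_var (Inr i) m else 0)"
    unfolding s_flow_def ser_neg_def ser_sum_def smat_pow_shiftT by (intro arg_cong[where f = uminus] infsum_cong) simp
  also have "(\<Sum>\<^sub>\<infinity>i\<in>{1..}. if a = b + i then ser_var (Inr i) m else 0) =
      (if b < a then ser_var (Inr (a - b)) m else 0)"
    by (subst infsum_eq_single_support[where x = "a - b"]) auto
  also have "- \<dots> = lower_toeplitz (renamed_z_coeff Inr (-1) gen_exponent) a b m"
    by (auto simp: lower_toeplitz_def renamed_z_coeff_gen_exponent ser_var_eq nat_diff_distrib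
        mfps_const.hom_uminus)
  finally show "s_flow a b m = lower_toeplitz (renamed_z_coeff Inr (-1) gen_exponent) a b m" .
qed

definition p_t :: "int \<Rightarrow> (nat + nat) mfps" where
  "p_t = renamed_z_coeff Inl 1 gen_series"

definition p_neg_s :: "int \<Rightarrow> (nat + nat) mfps" where
  "p_neg_s = renamed_z_coeff Inr (-1) gen_series"

lemma smat_exp_t_flow: "smat_exp t_flow = upper_toeplitz p_t"
  by (simp add: t_flow_eq smat_exp_upper_toeplitz gen_series_eq_exp p_t_def)

lemma smat_exp_s_flow: "smat_exp s_flow = lower_toeplitz p_neg_s"
  by (simp add: s_flow_eq smat_exp_lower_toeplitz gen_series_eq_exp p_neg_s_def)

section \<open>The Cauchy--Binet formula\<close>

definition increasing_lists :: "nat \<Rightarrow> nat \<Rightarrow> nat list set" where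
  "increasing_lists n N = {ks. length ks = n \<and> sorted_wrt (<) ks \<and> set ks \<subseteq> {..<N}}"

lemma finite_increasing_lists: "finite (increasing_lists n N)"
proof -
  have "increasing_lists n N \<subseteq> {xs. set xs \<subseteq> {..<N} \<and> length xs = n}"
    by (auto simp: increasing_lists_def)
  then show ?thesis by (rule finite_subset) (rule finite_lists_length_eq, simp)
qed

lemma increasing_lists_nth: "ks \<in> increasing_lists n N \<Longrightarrow> i < n \<Longrightarrow> ks ! i < N"
  unfolding increasing_lists_def using nth_mem by fastforce

definition col_submat :: "'a mat \<Rightarrow> nat list \<Rightarrow> 'a mat" where
  "col_submat A ks = mat (dim_row A) (length ks) (\<lambda>(i, j). A $$ (i, ks ! j))"

definition row_submat :: "'a mat \<Rightarrow> nat list \<Rightarrow> 'a mat" where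
  "row_submat A ks = mat (length ks) (dim_col A) (\<lambda>(i, j). A $$ (ks ! i, j))"

text \<open>Injective maps \<open>{0..<n} \<rightarrow> {0..<N}\<close>, extended by the identity: the index set of the
  expansion \<open>det_linear_rows_sum\<close>.\<close>

definition bounded_injections :: "nat \<Rightarrow> nat \<Rightarrow> (nat \<Rightarrow> nat) set" where
  "bounded_injections n N = {f. ((\<forall>i\<in>{0..<n}. f i \<in> {0..<N}) \<and> (\<forall>i. i \<notin> {0..<n} \<longrightarrow> f i = i))
     \<and> inj_on f {0..<n}}"

definition injection_of :: "nat \<Rightarrow> nat list \<times> (nat \<Rightarrow> nat) \<Rightarrow> nat \<Rightarrow> nat" where
  "injection_of n x = (\<lambda>i. if i < n then fst x ! snd x i else i)"

definition image_and_perm :: "nat \<Rightarrow> (nat \<Rightarrow> nat) \<Rightarrow> nat list \<times> (nat \<Rightarrow> nat)" where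
  "image_and_perm n f = (let ks = sorted_list_of_set (f ` {0..<n}) in
     (ks, \<lambda>x. if x < n then inv_into {..<n} ((!) ks) (f x) else x))"

lemma injection_of_in_bounded_injections:
  assumes ks: "ks \<in> increasing_lists n N" and p: "p permutes {0..<n}"
  shows "injection_of n (ks, p) \<in> bounded_injections n N"
proof -
  have k: "length ks = n" "distinct ks" using ks by (auto simp: increasing_lists_def strict_sorted_iff)
  have pin: "\<And>i. i < n \<Longrightarrow> p i < n" using permutes_in_image[OF p] by auto
  have "inj_on (injection_of n (ks, p)) {0..<n}"
  proof (rule inj_onI)
    fix x y assume "x \<in> {0..<n}" "y \<in> {0..<n}" "injection_of n (ks, p) x = injection_of n (ks, p) y"
    then have "p x = p y" using nth_eq_iff_index_eq[OF k(2)] pin k(1) by (auto simp: injection_of_def)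
    then show "x = y" using permutes_inj[OF p] by (simp add: inj_def)
  qed
  then show ?thesis
    using pin increasing_lists_nth[OF ks] by (auto simp: bounded_injections_def injection_of_def)
qed

lemma image_and_perm_in:
  assumes "f \<in> bounded_injections n N"
  shows "image_and_perm n f \<in> increasing_lists n N \<times> {p. p permutes {0..<n}}"
proof -
  have f: "\<forall>i\<in>{0..<n}. f i \<in> {0..<N}" "inj_on f {0..<n}"
    using assms by (auto simp: bounded_injections_def)
  let ?ks = "sorted_list_of_set (f ` {0..<n})"
  have len: "length ?ks = n" using f by (simp add: card_image)
  have bij: "bij_betw (inv_into {..<n} ((!) ?ks)) (f ` {0..<n}) {..<n}"
    using len by (intro bij_betw_inv_into bij_betw_nth) auto
  have "?ks \<in> increasing_lists n N"
    using f len by (auto simp: increasing_lists_def strict_sorted_list_of_set)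
  moreover have "(\<lambda>x. if x < n then inv_into {..<n} ((!) ?ks) (f x) else x) permutes {0..<n}"
  proof (rule inj_on_nat_permutes)
    show "inj_on (\<lambda>x. if x < n then inv_into {..<n} ((!) ?ks) (f x) else x) {0..<n}"
      using bij f(2) by (auto simp: bij_betw_def inj_on_def)
    show "(\<lambda>x. if x < n then inv_into {..<n} ((!) ?ks) (f x) else x) \<in> {0..<n} \<rightarrow> {0..<n}"
      using bij by (auto simp: bij_betw_def)
  qed auto
  ultimately show ?thesis by (simp add: image_and_perm_def Let_def)
qed

lemma image_and_perm_injection_of:
  assumes ks: "ks \<in> increasing_lists n N" and p: "p permutes {0..<n}"
  shows "image_and_perm n (injection_of n (ks, p)) = (ks, p)"
proof -
  have k: "length ks = n" "sorted ks" "distinct ks"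
    using ks by (auto simp: increasing_lists_def strict_sorted_iff)
  have "injection_of n (ks, p) ` {0..<n} = (!) ks ` (p ` {0..<n})"
    by (auto simp: injection_of_def image_image)
  also have "\<dots> = set ks" using permutes_image[OF p] k(1) by (auto simp: set_conv_nth)
  finally have img: "sorted_list_of_set (injection_of n (ks, p) ` {0..<n}) = ks"
    using k by (simp add: sorted_list_of_set.idem_if_sorted_distinct)
  have bij: "bij_betw ((!) ks) {..<n} (set ks)"
    using k by (intro bij_betw_nth) auto
  have "(\<lambda>x. if x < n then inv_into {..<n} ((!) ks) (injection_of n (ks, p) x) else x) = p"
  proof
    fix x
    show "(if x < n then inv_into {..<n} ((!) ks) (injection_of n (ks, p) x) else x) = p x"
      using bij permutes_in_image[OF p, of x] p
      by (auto simp: injection_of_def bij_betw_def permutes_def intro: inv_into_f_f)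
  qed
  then show ?thesis by (simp add: image_and_perm_def img Let_def)
qed

lemma injection_of_image_and_perm:
  assumes "f \<in> bounded_injections n N"
  shows "injection_of n (image_and_perm n f) = f"
proof
  fix x
  let ?ks = "sorted_list_of_set (f ` {0..<n})"
  have "length ?ks = n" using assms by (simp add: bounded_injections_def card_image)
  then have bij: "bij_betw ((!) ?ks) {..<n} (f ` {0..<n})"
    by (intro bij_betw_nth) auto
  show "injection_of n (image_and_perm n f) x = f x"
  proof (cases "x < n")
    case True
    then have "?ks ! inv_into {..<n} ((!) ?ks) (f x) = f x"
      using bij by (metis atLeastLessThan_iff bij_betw_inv_into_right imageI zero_le)
    then show ?thesis using True by (simp add: injection_of_def image_and_perm_def Let_def)
  next
    case False
    then show ?thesis using assms by (simp add: injection_of_def image_and_perm_def bounded_injections_def)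
  qed
qed

lemma bij_betw_injection_of:
  "bij_betw (injection_of n) (increasing_lists n N \<times> {p. p permutes {0..<n}}) (bounded_injections n N)"
proof (rule bij_betw_byWitness[where f' = "image_and_perm n"])
  show "image_and_perm n ` bounded_injections n N \<subseteq> increasing_lists n N \<times> {p. p permutes {0..<n}}"
    using image_and_perm_in by blast
qed (auto simp: image_and_perm_injection_of injection_of_image_and_perm injection_of_in_bounded_injections)

lemma det_mult_eq_sum_bounded_injections:
  fixes A B :: "'a :: comm_ring_1 mat"
  assumes A: "A \<in> carrier_mat n N" and B: "B \<in> carrier_mat N n"
  shows "det (A * B) =
    (\<Sum>f\<in>bounded_injections n N. (\<Prod>i\<in>{0..<n}. A $$ (i, f i)) * det (mat\<^sub>r n n (\<lambda>i. row B (f i))))"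
proof -
  let ?F = "{f. (\<forall>i\<in>{0..<n}. f i \<in> {0..<N}) \<and> (\<forall>i. i \<notin> {0..<n} \<longrightarrow> f i = i)}"
  let ?X = "\<lambda>f. (\<Prod>i\<in>{0..<n}. A $$ (i, f i)) * det (mat\<^sub>r n n (\<lambda>i. row B (f i)))"
  have rowB: "\<And>k. row B k \<in> carrier_vec n" using B by auto
  have "det (A * B) = (\<Sum>f\<in>?F. det (mat\<^sub>r n n (\<lambda>i. A $$ (i, f i) \<cdot>\<^sub>v row B (f i))))"
    unfolding mat_mul_finsum_alt[OF A B]
    by (rule det_linear_rows_sum) (use rowB in auto)
  also have "\<dots> = (\<Sum>f\<in>?F. ?X f)"
    by (rule sum.cong[OF refl], rule det_rows_mul) (use rowB in auto)
  also have "\<dots> = (\<Sum>f\<in>bounded_injections n N. ?X f)"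
  proof (rule sum.mono_neutral_right)
    show "finite ?F" by (rule finite_bounded_functions) auto
    show "\<forall>f\<in>?F - bounded_injections n N. ?X f = 0"
    proof
      fix f assume "f \<in> ?F - bounded_injections n N"
      then obtain i j where "i < n" "j < n" "i \<noteq> j" "f i = f j"
        by (auto simp: bounded_injections_def inj_on_def)
      then have "det (mat\<^sub>r n n (\<lambda>i. row B (f i))) = 0"
        by (intro det_identical_rows[of _ n i j]) (use rowB in auto)
      then show "?X f = 0" by simp
    qed
  qed (auto simp: bounded_injections_def)
  finally show ?thesis .
qed

lemma sum_permutes_det_submats:
  fixes A B :: "'a :: comm_ring_1 mat"
  assumes A: "A \<in> carrier_mat n N" and B: "B \<in> carrier_mat N n" and ks: "ks \<in> increasing_lists n N"
  shows "(\<Sum>p | p permutes {0..<n}. (\<Prod>i\<in>{0..<n}. A $$ (i, injection_of n (ks, p) i)) *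
      det (mat\<^sub>r n n (\<lambda>i. row B (injection_of n (ks, p) i)))) =
    det (col_submat A ks) * det (row_submat B ks)"
proof -
  have len: "length ks = n" using ks by (simp add: increasing_lists_def)
  have Bk: "row_submat B ks \<in> carrier_mat n n" using B len by (simp add: row_submat_def)
  have "(\<Prod>i\<in>{0..<n}. A $$ (i, injection_of n (ks, p) i)) * det (mat\<^sub>r n n (\<lambda>i. row B (injection_of n (ks, p) i))) =
      of_int (sign p) * (\<Prod>i\<in>{0..<n}. col_submat A ks $$ (i, p i)) * det (row_submat B ks)"
    if p: "p permutes {0..<n}" for p
  proof -
    have pin: "\<And>i. i < n \<Longrightarrow> p i < n" using permutes_in_image[OF p] by auto
    have "mat\<^sub>r n n (\<lambda>i. row B (injection_of n (ks, p) i)) = mat n n (\<lambda>(i, j). row_submat B ks $$ (p i, j))"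
      by (rule eq_matI) (use pin len B in \<open>auto simp: injection_of_def row_submat_def Matrix.row_def\<close>)
    then have "det (mat\<^sub>r n n (\<lambda>i. row B (injection_of n (ks, p) i))) = of_int (sign p) * det (row_submat B ks)"
      using det_permute_rows[OF Bk p] by simp
    moreover have "(\<Prod>i\<in>{0..<n}. A $$ (i, injection_of n (ks, p) i)) = (\<Prod>i\<in>{0..<n}. col_submat A ks $$ (i, p i))"
      by (rule prod.cong) (use A len pin in \<open>auto simp: injection_of_def col_submat_def\<close>)
    ultimately show ?thesis by (simp add: ac_simps)
  qed
  then have "(\<Sum>p | p permutes {0..<n}. (\<Prod>i\<in>{0..<n}. A $$ (i, injection_of n (ks, p) i)) *
      det (mat\<^sub>r n n (\<lambda>i. row B (injection_of n (ks, p) i)))) =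
    (\<Sum>p | p permutes {0..<n}. of_int (sign p) * (\<Prod>i\<in>{0..<n}. col_submat A ks $$ (i, p i))) * det (row_submat B ks)"
    by (simp add: sum_distrib_right)
  also have "(\<Sum>p | p permutes {0..<n}. of_int (sign p) * (\<Prod>i\<in>{0..<n}. col_submat A ks $$ (i, p i))) =
      det (col_submat A ks)"
    by (rule det_def'[symmetric]) (use A len in \<open>simp add: col_submat_def\<close>)
  finally show ?thesis .
qed

theorem cauchy_binet:
  fixes A B :: "'a :: comm_ring_1 mat"
  assumes A: "A \<in> carrier_mat n N" and B: "B \<in> carrier_mat N n"
  shows "det (A * B) = (\<Sum>ks\<in>increasing_lists n N. det (col_submat A ks) * det (row_submat B ks))"
proof -
  let ?X = "\<lambda>f. (\<Prod>i\<in>{0..<n}. A $$ (i, f i)) * det (mat\<^sub>r n n (\<lambda>i. row B (f i)))"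
  have "det (A * B) = (\<Sum>f\<in>bounded_injections n N. ?X f)"
    by (rule det_mult_eq_sum_bounded_injections[OF A B])
  also have "\<dots> = (\<Sum>x\<in>increasing_lists n N \<times> {p. p permutes {0..<n}}. ?X (injection_of n x))"
    by (rule sum.reindex_bij_betw[OF bij_betw_injection_of, symmetric])
  also have "\<dots> = (\<Sum>ks\<in>increasing_lists n N. \<Sum>p | p permutes {0..<n}. ?X (injection_of n (ks, p)))"
    by (simp add: sum.cartesian_product case_prod_beta')
  also have "\<dots> = (\<Sum>ks\<in>increasing_lists n N. det (col_submat A ks) * det (row_submat B ks))"
    by (rule sum.cong[OF refl], rule sum_permutes_det_submats[OF A B])
  finally show ?thesis .
qed

corollary cauchy_binet_triple:
  fixes A M B :: "'a :: comm_ring_1 mat"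
  assumes A: "A \<in> carrier_mat n N" and M: "M \<in> carrier_mat N N" and B: "B \<in> carrier_mat N n"
  shows "det (A * M * B) = (\<Sum>ks\<in>increasing_lists n N. \<Sum>rs\<in>increasing_lists n N.
      det (col_submat A ks) * det (row_submat (col_submat M rs) ks) * det (row_submat B rs))"
proof -
  have "det (A * M * B) = det (A * (M * B))" using assoc_mult_mat[OF A M B] by simp
  also have "\<dots> = (\<Sum>ks\<in>increasing_lists n N. det (col_submat A ks) * det (row_submat (M * B) ks))"
    using M B by (intro cauchy_binet[OF A]) simp
  also have "\<dots> = (\<Sum>ks\<in>increasing_lists n N. det (col_submat A ks) *
      (\<Sum>rs\<in>increasing_lists n N. det (row_submat (col_submat M rs) ks) * det (row_submat B rs)))"
  proof (rule sum.cong[OF refl])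
    fix ks assume ks: "ks \<in> increasing_lists n N"
    then have len: "length ks = n" by (simp add: increasing_lists_def)
    have Mk: "row_submat M ks \<in> carrier_mat n N" using M len by (simp add: row_submat_def)
    have "row_submat (M * B) ks = row_submat M ks * B"
      using M B increasing_lists_nth[OF ks] len
      by (intro eq_matI) (auto simp: row_submat_def scalar_prod_def)
    moreover have "col_submat (row_submat M ks) rs = row_submat (col_submat M rs) ks"
      if "rs \<in> increasing_lists n N" for rs
      using M len that increasing_lists_nth[OF that] increasing_lists_nth[OF ks]
      by (intro eq_matI) (auto simp: row_submat_def col_submat_def increasing_lists_def)
    ultimately show "det (col_submat A ks) * det (row_submat (M * B) ks) = det (col_submat A ks) *
        (\<Sum>rs\<in>increasing_lists n N. det (row_submat (col_submat M rs) ks) * det (row_submat B rs))"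
      using cauchy_binet[OF Mk B] by simp
  qed
  finally show ?thesis by (simp add: sum_distrib_left mult.assoc)
qed

section \<open>Young diagrams as increasing lists\<close>

definition rev_perm :: "nat \<Rightarrow> nat \<Rightarrow> nat" where
  "rev_perm n i = (if i < n then n - 1 - i else i)"

lemma rev_perm_permutes: "rev_perm n permutes {0..<n}"
proof (rule inj_on_nat_permutes)
  show "inj_on (rev_perm n) {0..<n}" by (rule inj_onI) (auto simp: rev_perm_def)
  show "rev_perm n \<in> {0..<n} \<rightarrow> {0..<n}" by (auto simp: rev_perm_def)
qed (auto simp: rev_perm_def)

lemma det_reverse_rows_cols:
  fixes f :: "nat \<Rightarrow> nat \<Rightarrow> 'a :: comm_ring_1"
  shows "det (mat n n (\<lambda>(i, j). f (n - 1 - i) (n - 1 - j))) = det (mat n n (\<lambda>(i, j). f i j))"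
proof -
  let ?p = "rev_perm n"
  let ?M = "mat n n (\<lambda>(i, j). f i j)"
  let ?M1 = "mat n n (\<lambda>(i, j). f (n - 1 - i) j)"
  have "?M1 = mat n n (\<lambda>(i, j). ?M $$ (?p i, j))"
    by (rule eq_matI) (auto simp: rev_perm_def)
  then have M1: "det ?M1 = of_int (sign ?p) * det ?M"
    by (simp only:) (rule det_permute_rows[OF _ rev_perm_permutes], simp)
  have "mat n n (\<lambda>(i, j). f (n - 1 - i) (n - 1 - j)) = (mat n n (\<lambda>(i, j). ?M1\<^sup>T $$ (?p i, j)))\<^sup>T"
    by (rule eq_matI) (auto simp: rev_perm_def)
  then have "det (mat n n (\<lambda>(i, j). f (n - 1 - i) (n - 1 - j))) = det (mat n n (\<lambda>(i, j). ?M1\<^sup>T $$ (?p i, j)))"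
    by (simp only:) (rule det_transpose[of _ n], simp)
  also have "\<dots> = of_int (sign ?p) * det ?M1\<^sup>T"
    by (rule det_permute_rows[OF _ rev_perm_permutes]) simp
  also have "det ?M1\<^sup>T = det ?M1"
    by (rule det_transpose[of _ n]) simp
  also note M1
  also have "of_int (sign ?p) * (of_int (sign ?p) * det ?M) = det ?M"
  proof -
    have "of_int (sign ?p) * of_int (sign ?p) = (1 :: 'a)" by (simp add: sign_def)
    then show ?thesis by (simp add: mult.assoc[symmetric])
  qed
  finally show ?thesis .
qed

text \<open>The list \<open>(\<lambda>\<^sub>n\<^sub>-\<^sub>j + j)\<^sub>j\<^sub><\<^sub>n\<close> (rows counted from 1) is the set \<open>{\<lambda>\<^sub>i - i + n}\<close> in increasing order.\<close>

definition young_to_increasing :: "nat \<Rightarrow> nat list \<Rightarrow> nat list" where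
  "young_to_increasing n lam = map (\<lambda>j. lam ! (n - 1 - j) + j) [0..<n]"

definition increasing_to_young :: "nat \<Rightarrow> nat list \<Rightarrow> nat list" where
  "increasing_to_young n ks = map (\<lambda>i. ks ! (n - 1 - i) - (n - 1 - i)) [0..<n]"

definition young_bounded :: "nat \<Rightarrow> nat \<Rightarrow> nat list set" where
  "young_bounded n N = {lam \<in> young n. lam ! 0 + n \<le> N}"

lemma sorted_wrt_less_nth_add:
  assumes "sorted_wrt (<) ks" "a \<le> b" "b < length ks"
  shows "ks ! a + (b - a) \<le> ks ! b"
  using assms(2,3)
proof (induction b)
  case (Suc b)
  show ?case
  proof (cases "a = Suc b")
    case False
    then have "ks ! a + (b - a) \<le> ks ! b" using Suc by simp
    moreover have "ks ! b < ks ! Suc b" using assms(1) Suc(3) by (simp add: sorted_wrt_iff_nth_less)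
    ultimately show ?thesis using False Suc(2) by linarith
  qed simp
qed simp

lemma young_nth_antimono: "lam \<in> young n \<Longrightarrow> i \<le> j \<Longrightarrow> j < n \<Longrightarrow> lam ! j \<le> lam ! i"
  by (cases "i = j") (auto simp: young_def sorted_wrt_iff_nth_less)

lemma young_to_increasing_in:
  assumes n: "n > 0" and lam: "lam \<in> young_bounded n N"
  shows "young_to_increasing n lam \<in> increasing_lists n N"
proof -
  have y: "lam \<in> young n" "lam ! 0 + n \<le> N" using lam by (auto simp: young_bounded_def)
  have "lam ! (n - 1 - i) \<le> lam ! (n - 1 - j)" if "i < j" "j < n" for i j
    using young_nth_antimono[OF y(1), of "n - 1 - j" "n - 1 - i"] that by simp
  moreover have "lam ! (n - 1 - j) \<le> lam ! 0" if "j < n" for j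
    using young_nth_antimono[OF y(1), of 0 "n - 1 - j"] that n by simp
  ultimately show ?thesis
    using y(2) by (fastforce simp: increasing_lists_def young_to_increasing_def sorted_wrt_iff_nth_less)
qed

lemma increasing_to_young_in:
  assumes n: "n > 0" and ks: "ks \<in> increasing_lists n N"
  shows "increasing_to_young n ks \<in> young_bounded n N"
proof -
  let ?lam = "increasing_to_young n ks"
  have k: "length ks = n" "sorted_wrt (<) ks" using ks by (auto simp: increasing_lists_def)
  have nth: "?lam ! i = ks ! (n - 1 - i) - (n - 1 - i)" if "i < n" for i
    using that by (simp add: increasing_to_young_def)
  have "?lam ! j \<le> ?lam ! i" if "i < j" "j < n" for i j
  proof -
    have "ks ! (n - 1 - j) + ((n - 1 - i) - (n - 1 - j)) \<le> ks ! (n - 1 - i)"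
      using sorted_wrt_less_nth_add[OF k(2), of "n - 1 - j" "n - 1 - i"] that k(1) by simp
    moreover have "n - 1 - j \<le> n - 1 - i" using that by simp
    moreover have "a + (y - x) \<le> b \<Longrightarrow> x \<le> y \<Longrightarrow> a - x \<le> b - y" for a b x y :: nat
      by linarith
    ultimately show ?thesis using that by (simp only: nth)
  qed
  then have "sorted_wrt (\<lambda>x y. x \<ge> y) ?lam"
    by (simp add: sorted_wrt_iff_nth_less increasing_to_young_def)
  moreover have "?lam ! 0 + n \<le> N"
    using increasing_lists_nth[OF ks, of "n - 1"] sorted_wrt_less_nth_add[OF k(2), of 0 "n - 1"] k(1) n
    by (simp add: nth)
  ultimately show ?thesis
    by (simp add: young_bounded_def young_def increasing_to_young_def)
qed

lemma bij_betw_young_to_increasing: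
  assumes n: "n > 0"
  shows "bij_betw (young_to_increasing n) (young_bounded n N) (increasing_lists n N)"
proof (rule bij_betw_byWitness[where f' = "increasing_to_young n"])
  show "\<forall>lam\<in>young_bounded n N. increasing_to_young n (young_to_increasing n lam) = lam"
    by (auto simp: young_bounded_def young_def young_to_increasing_def increasing_to_young_def
        intro!: nth_equalityI)
  show "\<forall>ks\<in>increasing_lists n N. young_to_increasing n (increasing_to_young n ks) = ks"
  proof
    fix ks assume "ks \<in> increasing_lists n N"
    then have k: "length ks = n" "sorted_wrt (<) ks" by (auto simp: increasing_lists_def)
    have "j \<le> ks ! j" if "j < n" for j using sorted_wrt_less_nth_add[OF k(2), of 0 j] that k(1) by simp
    then show "young_to_increasing n (increasing_to_young n ks) = ks"
      using k by (auto simp: young_to_increasing_def increasing_to_young_def intro!: nth_equalityI)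
  qed
qed (use young_to_increasing_in[OF n] increasing_to_young_in[OF n] in blast)+

lemma finite_young_bounded: "n > 0 \<Longrightarrow> finite (young_bounded n N)"
  using bij_betw_finite[OF bij_betw_young_to_increasing] finite_increasing_lists by blast

section \<open>Weights and truncation\<close>

definition agree_upto :: "('v \<Rightarrow> nat) \<Rightarrow> nat \<Rightarrow> 'v mfps \<Rightarrow> 'v mfps \<Rightarrow> bool" where
  "agree_upto g w x y \<longleftrightarrow> (\<forall>a. mon_weight g a \<le> w \<longrightarrow> coeffs x a = coeffs y a)"

lemma agree_upto_refl [simp]: "agree_upto g w x x"
  by (simp add: agree_upto_def)

lemma agree_upto_trans: "agree_upto g w x y \<Longrightarrow> agree_upto g w y z \<Longrightarrow> agree_upto g w x z"
  by (simp add: agree_upto_def)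

lemma agree_upto_coeffs: "agree_upto g w x y \<Longrightarrow> mon_weight g a \<le> w \<Longrightarrow> coeffs x a = coeffs y a"
  by (simp add: agree_upto_def)

lemma agree_upto_add: "agree_upto g w x x' \<Longrightarrow> agree_upto g w y y' \<Longrightarrow> agree_upto g w (x + y) (x' + y')"
  by (simp add: agree_upto_def)

text \<open>Weights are additive, so coefficients of a product only involve coefficients of
  smaller weight.\<close>

lemma agree_upto_mult:
  assumes "agree_upto g w x x'" "agree_upto g w y y'"
  shows "agree_upto g w (x * y) (x' * y')"
  unfolding agree_upto_def
proof (intro allI impI)
  fix a assume a: "mon_weight g a \<le> w"
  have "coeffs x p * coeffs y q = coeffs x' p * coeffs y' q" if "p + q = a" for p q
    using assms a that mon_weight_add[of g p q] by (simp add: agree_upto_def)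
  then show "coeffs (x * y) a = coeffs (x' * y') a"
    unfolding coeffs_times ser_mult_def by (intro sum.cong) auto
qed

lemma agree_upto_sum:
  "(\<And>i. i \<in> A \<Longrightarrow> agree_upto g w (f i) (h i)) \<Longrightarrow> agree_upto g w (sum f A) (sum h A)"
  by (induction A rule: infinite_finite_induct) (auto simp: agree_upto_add)

lemma agree_upto_prod:
  "(\<And>i. i \<in> A \<Longrightarrow> agree_upto g w (f i) (h i)) \<Longrightarrow> agree_upto g w (prod f A) (prod h A)"
  by (induction A rule: infinite_finite_induct) (auto simp: agree_upto_mult)

lemma agree_upto_det:
  assumes "A \<in> carrier_mat n n" "B \<in> carrier_mat n n"
    and "\<And>i j. i < n \<Longrightarrow> j < n \<Longrightarrow> agree_upto g w (A $$ (i, j)) (B $$ (i, j))"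
  shows "agree_upto g w (det A) (det B)"
  unfolding det_def'[OF assms(1)] det_def'[OF assms(2)]
proof (intro agree_upto_sum agree_upto_mult agree_upto_refl agree_upto_prod)
  fix p i assume "p \<in> {p. p permutes {0..<n}}" "i \<in> {0..<n}"
  then show "agree_upto g w (A $$ (i, p i)) (B $$ (i, p i))"
    using assms(3) permutes_in_image by fastforce
qed

lemma agree_upto_det_zero_row:
  assumes "0 < n" "A \<in> carrier_mat n n" "\<And>j. j < n \<Longrightarrow> agree_upto g w (A $$ (0, j)) 0"
  shows "agree_upto g w (det A) 0"
  unfolding det_def'[OF assms(2)]
proof (rule agree_upto_trans[OF agree_upto_sum, of _ _ _ _ "\<lambda>_. 0"])
  fix p assume "p \<in> {p. p permutes {0..<n}}"
  then have p0: "p 0 < n" using permutes_in_image assms(1) by fastforce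
  have "(\<Prod>i = 0..<n. A $$ (i, p i)) = A $$ (0, p 0) * (\<Prod>i \<in> {0..<n} - {0}. A $$ (i, p i))"
    using assms(1) by (simp add: prod.remove)
  also have "agree_upto g w \<dots> (0 * (\<Prod>i \<in> {0..<n} - {0}. A $$ (i, p i)))"
    using assms(3)[OF p0] by (rule agree_upto_mult) simp
  finally show "agree_upto g w (signof p * (\<Prod>i = 0..<n. A $$ (i, p i))) 0"
    using agree_upto_mult[OF agree_upto_refl, of g w _ _ "signof p"] by fastforce
qed simp

lemma agree_upto_infsum:
  assumes "finite K" "\<And>k. k \<notin> K \<Longrightarrow> agree_upto g w (F k) 0" "\<And>k. k \<in> K \<Longrightarrow> agree_upto g w (F k) (G k)"
  shows "agree_upto g w (mfps (ser_sum (\<lambda>k. coeffs (F k)) UNIV)) (\<Sum>k\<in>K. G k)"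
  unfolding agree_upto_def
proof (intro allI impI)
  fix a assume a: "mon_weight g a \<le> w"
  have "coeffs (mfps (ser_sum (\<lambda>k. coeffs (F k)) UNIV)) a = (\<Sum>k\<in>K. coeffs (F k) a)"
    unfolding mfps_inverse[OF UNIV_I] ser_sum_def
    by (subst infsum_eq_sum_support[where S = K]) (use assms a in \<open>auto simp: agree_upto_def\<close>)
  also have "\<dots> = coeffs (\<Sum>k\<in>K. G k) a"
    using assms a by (auto simp: agree_upto_def intro: sum.cong)
  finally show "coeffs (mfps (ser_sum (\<lambda>k. coeffs (F k)) UNIV)) a = coeffs (\<Sum>k\<in>K. G k) a" .
qed

text \<open>Balanced means that the exponent of \<open>z\<close> equals the weighted degree \<open>\<Sigma> i b\<^sub>i\<close> in the
  \<open>t\<^sub>i\<close> (\<open>z\<close> itself has weight 0); this makes \<open>p\<^sub>d\<close> homogeneous of weight \<open>d\<close>.\<close>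

definition z_balanced :: "nat ser \<Rightarrow> bool" where
  "z_balanced F \<longleftrightarrow> (\<forall>b. F b \<noteq> 0 \<longrightarrow> lookup b 0 = mon_weight id b)"

lemma ser_mult_nonzero_split:
  assumes "ser_mult F G b \<noteq> 0"
  obtains p q where "p + q = b" "F p \<noteq> 0" "G q \<noteq> 0"
proof -
  have "\<not> (\<forall>x\<in>{(p, q). p + q = b}. (case x of (p, q) \<Rightarrow> F p * G q) = 0)"
    using assms sum.neutral unfolding ser_mult_def by blast
  then show ?thesis using that by auto
qed

lemma z_balanced_mult: "z_balanced F \<Longrightarrow> z_balanced G \<Longrightarrow> z_balanced (ser_mult F G)"
  unfolding z_balanced_def
  by (metis ser_mult_nonzero_split lookup_add mon_weight_add)

lemma z_balanced_one: "z_balanced ser_one"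
  by (simp add: z_balanced_def ser_one_def ser_const_def)

lemma z_balanced_pow: "z_balanced F \<Longrightarrow> z_balanced (ser_pow F k)"
  by (induction k) (simp_all add: ser_pow_def z_balanced_mult z_balanced_one)

lemma z_balanced_scale: "z_balanced F \<Longrightarrow> z_balanced (ser_scale c F)"
  by (simp add: z_balanced_def ser_scale_def)

lemma z_balanced_ser_sum: "(\<And>i. i \<in> I \<Longrightarrow> z_balanced (F i)) \<Longrightarrow> z_balanced (ser_sum F I)"
  unfolding z_balanced_def ser_sum_def
  by (metis (mono_tags, lifting) infsum_0)

lemma z_balanced_gen_series: "z_balanced gen_series"
proof -
  have "z_balanced (ser_mult (ser_var i) (ser_pow (ser_var 0) i))" if "i \<in> {1..}" for i
    using that by (simp add: gen_exponent_term z_balanced_def coeffs_mfps_monom lookup_add mon_weight_add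
        mon_weight_single lookup_single when_def)
  then have "z_balanced gen_exponent"
    unfolding gen_exponent_def by (rule z_balanced_ser_sum)
  then show ?thesis
    unfolding gen_series_eq_exp ser_exp_def by (intro z_balanced_ser_sum z_balanced_scale z_balanced_pow)
qed

lemma mon_weight_renamed_z_coeff_gen_series:
  assumes "inj f" "\<And>x. g (f x) = x" "coeffs (renamed_z_coeff f e gen_series d) a \<noteq> 0"
  shows "mon_weight g a = nat d"
proof -
  let ?c = "Poly_Mapping.map_key f a"
  have c: "keys a \<subseteq> range f" "lookup ?c 0 = 0" "gen_series (?c + single 0 (nat d)) \<noteq> 0"
    using assms(3) by (auto simp: coeffs_renamed_z_coeff split: if_splits)
  have "lookup (?c + single 0 (nat d)) 0 = mon_weight id (?c + single 0 (nat d))"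
    using z_balanced_gen_series c(3) by (simp add: z_balanced_def)
  then have "nat d = mon_weight id ?c"
    using c(2) by (simp add: lookup_add mon_weight_add mon_weight_single)
  also have "\<dots> = mon_weight g (mon_push f ?c)"
    using assms(2) by (simp add: mon_weight_mon_push[OF assms(1)] comp_def id_def)
  also have "mon_push f ?c = a"
    by (rule mon_push_map_key[OF assms(1) c(1)])
  finally show ?thesis by simp
qed

lemma agree_upto_renamed_z_coeff_gen_series:
  assumes "inj f" "\<And>x. g (f x) = x" "int w < d"
  shows "agree_upto g w (renamed_z_coeff f e gen_series d) 0"
  using mon_weight_renamed_z_coeff_gen_series[OF assms(1,2)] assms(3)
  by (force simp: agree_upto_def)

section \<open>Truncation of \<open>m\<^sub>\<infinity>(t,s)\<close> and the expansion of \<open>\<tau>\<^sub>n\<close>\<close>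

definition ts_index :: "nat + nat \<Rightarrow> nat" where
  "ts_index = case_sum id id"

lemma agree_upto_p_t: "int w < d \<Longrightarrow> agree_upto ts_index w (p_t d) 0"
  unfolding p_t_def by (rule agree_upto_renamed_z_coeff_gen_series) (simp_all add: ts_index_def)

lemma agree_upto_p_neg_s: "int w < d \<Longrightarrow> agree_upto ts_index w (p_neg_s d) 0"
  unfolding p_neg_s_def by (rule agree_upto_renamed_z_coeff_gen_series) (simp_all add: ts_index_def)

definition p_t_mat :: "nat \<Rightarrow> nat \<Rightarrow> (nat + nat) mfps mat" where
  "p_t_mat n N = mat n N (\<lambda>(r, k). p_t (int k - int r))"

definition mu_mat :: "(nat \<Rightarrow> nat \<Rightarrow> complex) \<Rightarrow> nat \<Rightarrow> (nat + nat) mfps mat" where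
  "mu_mat \<mu> N = mat N N (\<lambda>(k, l). mfps_const (\<mu> k l))"

definition p_neg_s_mat :: "nat \<Rightarrow> nat \<Rightarrow> (nat + nat) mfps mat" where
  "p_neg_s_mat N n = mat N n (\<lambda>(l, c). p_neg_s (int l - int c))"

lemma m_inf_eq:
  "m_inf \<mu> i j = ser_sum (\<lambda>l. ser_mult
      (ser_sum (\<lambda>k. ser_mult (coeffs (p_t (int k - int i))) (coeffs (mfps_const (\<mu> k l)))) UNIV)
      (coeffs (p_neg_s (int l - int j)))) UNIV"
  by (simp add: m_inf_def smat_mult_def smat_exp_t_flow smat_exp_s_flow upper_toeplitz_def
      lower_toeplitz_def mfps_const_def mfps_inverse)

text \<open>Entries \<open>p\<^sub>d\<close> with \<open>d > w\<close> have no monomials of weight \<open>\<le> w\<close>, so inner indices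
  \<open>\<ge> N\<close> drop out.\<close>

lemma agree_upto_m_inf_truncated:
  assumes ij: "i < n" "j < n" and N: "n + w < N"
  shows "agree_upto ts_index w (mfps (m_inf \<mu> i j)) ((p_t_mat n N * mu_mat \<mu> N * p_neg_s_mat N n) $$ (i, j))"
proof -
  let ?A = "p_t_mat n N" and ?M = "mu_mat \<mu> N" and ?B = "p_neg_s_mat N n"
  define X where "X l = mfps (ser_sum (\<lambda>k. coeffs (p_t (int k - int i) * mfps_const (\<mu> k l))) UNIV)" for l
  have X: "agree_upto ts_index w (X l) ((?A * ?M) $$ (i, l))" if "l < N" for l
  proof -
    have "agree_upto ts_index w (X l) (\<Sum>k\<in>{0..<N}. ?A $$ (i, k) * ?M $$ (k, l))"
      unfolding X_def
    proof (rule agree_upto_infsum)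
      fix k assume "k \<notin> {0..<N}"
      then show "agree_upto ts_index w (p_t (int k - int i) * mfps_const (\<mu> k l)) 0"
        using agree_upto_mult[OF agree_upto_p_t agree_upto_refl] ij N by fastforce
    qed (use ij that in \<open>auto simp: p_t_mat_def mu_mat_def\<close>)
    then show ?thesis
      using ij that by (simp add: p_t_mat_def mu_mat_def scalar_prod_def)
  qed
  have "agree_upto ts_index w (mfps (ser_sum (\<lambda>l. coeffs (X l * p_neg_s (int l - int j))) UNIV))
      (\<Sum>l\<in>{0..<N}. (?A * ?M) $$ (i, l) * ?B $$ (l, j))"
  proof (rule agree_upto_infsum)
    fix l assume "l \<notin> {0..<N}"
    then show "agree_upto ts_index w (X l * p_neg_s (int l - int j)) 0"
      using agree_upto_mult[OF agree_upto_refl agree_upto_p_neg_s] ij N by fastforce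
  qed (use ij X in \<open>auto simp: p_neg_s_mat_def intro: agree_upto_mult\<close>)
  moreover have "ser_sum (\<lambda>l. coeffs (X l * p_neg_s (int l - int j))) UNIV = m_inf \<mu> i j"
    by (simp add: m_inf_eq X_def coeffs_times mfps_inverse)
  ultimately show ?thesis
    using ij by (simp add: p_t_mat_def mu_mat_def p_neg_s_mat_def scalar_prod_def)
qed

lemma tau_coeff_eq_truncated:
  assumes "n + mon_weight ts_index m < N"
  shows "tau \<mu> n m = coeffs (det (p_t_mat n N * mu_mat \<mu> N * p_neg_s_mat N n)) m"
proof -
  have "agree_upto ts_index (mon_weight ts_index m)
      (det (mat n n (\<lambda>(i, j). mfps (m_inf \<mu> i j)))) (det (p_t_mat n N * mu_mat \<mu> N * p_neg_s_mat N n))"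
    by (rule agree_upto_det) (use agree_upto_m_inf_truncated[OF _ _ assms] in
        \<open>auto simp: p_t_mat_def p_neg_s_mat_def\<close>)
  then show ?thesis
    by (simp add: tau_def ser_det_eq agree_upto_coeffs)
qed

definition schur_t :: "nat list \<Rightarrow> (nat + nat) mfps" where
  "schur_t lam = det (mat (length lam) (length lam) (\<lambda>(i, j). p_t (int (lam ! i) - int i + int j)))"

definition schur_neg_s :: "nat list \<Rightarrow> (nat + nat) mfps" where
  "schur_neg_s nu = det (mat (length nu) (length nu) (\<lambda>(i, j). p_neg_s (int (nu ! i) - int i + int j)))"

definition mu_minor :: "(nat \<Rightarrow> nat \<Rightarrow> complex) \<Rightarrow> nat \<Rightarrow> nat list \<Rightarrow> nat list \<Rightarrow> complex" where
  "mu_minor \<mu> n lam nu = det (mat n n (\<lambda>(i, j). \<mu> (lam ! i + n - Suc i) (nu ! j + n - Suc j)))"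

lemma schur_t_eq_subst: "mfps (ser_subst t_vars (schur lam)) = schur_t lam"
proof -
  interpret comm_ring_hom "mfps_rename (Inl :: nat \<Rightarrow> nat + nat) 1"
    by (rule comm_ring_hom_mfps_rename) simp
  let ?n = "length lam"
  let ?M = "mat ?n ?n (\<lambda>(i, j). mfps (schur_p (int (lam ! i) - int i + int j)))"
  have "mfps (ser_subst t_vars (schur lam)) = mfps_rename Inl 1 (det ?M)"
    by (simp add: ser_subst_t_vars schur_def ser_det_eq mfps_rename_def)
  also have "\<dots> = det (map_mat (mfps_rename Inl 1) ?M)"
    by (rule hom_det[symmetric])
  also have "map_mat (mfps_rename Inl 1) ?M = mat ?n ?n (\<lambda>(i, j). p_t (int (lam ! i) - int i + int j))"
    by (rule eq_matI) (auto simp: p_t_def renamed_z_coeff_def schur_p_eq_z_coeff)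
  finally show ?thesis by (simp add: schur_t_def)
qed

lemma schur_neg_s_eq_subst: "mfps (ser_subst neg_s_vars (schur nu)) = schur_neg_s nu"
proof -
  interpret comm_ring_hom "mfps_rename (Inr :: nat \<Rightarrow> nat + nat) (-1)"
    by (rule comm_ring_hom_mfps_rename) simp
  let ?n = "length nu"
  let ?M = "mat ?n ?n (\<lambda>(i, j). mfps (schur_p (int (nu ! i) - int i + int j)))"
  have "mfps (ser_subst neg_s_vars (schur nu)) = mfps_rename Inr (-1) (det ?M)"
    by (simp add: ser_subst_neg_s_vars schur_def ser_det_eq mfps_rename_def)
  also have "\<dots> = det (map_mat (mfps_rename Inr (-1)) ?M)"
    by (rule hom_det[symmetric])
  also have "map_mat (mfps_rename Inr (-1)) ?M = mat ?n ?n (\<lambda>(i, j). p_neg_s (int (nu ! i) - int i + int j))"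
    by (rule eq_matI) (auto simp: p_neg_s_def renamed_z_coeff_def schur_p_eq_z_coeff)
  finally show ?thesis by (simp add: schur_neg_s_def)
qed

lemma agree_upto_schur_t:
  assumes "lam \<noteq> []" "w < lam ! 0"
  shows "agree_upto ts_index w (schur_t lam) 0"
  unfolding schur_t_def
  by (rule agree_upto_det_zero_row[of "length lam"]) (use assms in \<open>auto intro!: agree_upto_p_t\<close>)

lemma agree_upto_schur_neg_s:
  assumes "nu \<noteq> []" "w < nu ! 0"
  shows "agree_upto ts_index w (schur_neg_s nu) 0"
  unfolding schur_neg_s_def
  by (rule agree_upto_det_zero_row[of "length nu"]) (use assms in \<open>auto intro!: agree_upto_p_neg_s\<close>)

lemma det_col_submat_p_t_mat:
  assumes "lam \<in> young_bounded n N" "n > 0"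
  shows "det (col_submat (p_t_mat n N) (young_to_increasing n lam)) = schur_t lam"
proof -
  let ?f = "\<lambda>i j. p_t (int (lam ! i) - int i + int j)"
  have len: "length lam = n" using assms by (simp add: young_bounded_def young_def)
  have ks: "young_to_increasing n lam \<in> increasing_lists n N"
    by (rule young_to_increasing_in[OF assms(2,1)])
  have "col_submat (p_t_mat n N) (young_to_increasing n lam) = (mat n n (\<lambda>(i, j). ?f (n - 1 - i) (n - 1 - j)))\<^sup>T"
  proof (rule eq_matI)
    fix i j assume "i < dim_row (mat n n (\<lambda>(i, j). ?f (n - 1 - i) (n - 1 - j)))\<^sup>T"
      "j < dim_col (mat n n (\<lambda>(i, j). ?f (n - 1 - i) (n - 1 - j)))\<^sup>T"
    then have ij: "i < n" "j < n" by auto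
    then have "int (lam ! (n - 1 - j) + j) - int i = int (lam ! (n - 1 - j)) - int (n - 1 - j) + int (n - 1 - i)"
      by linarith
    then show "col_submat (p_t_mat n N) (young_to_increasing n lam) $$ (i, j) =
        (mat n n (\<lambda>(i, j). ?f (n - 1 - i) (n - 1 - j)))\<^sup>T $$ (i, j)"
      using ij increasing_lists_nth[OF ks, of j]
      by (simp add: col_submat_def p_t_mat_def young_to_increasing_def add_diff_eq)
  qed (simp_all add: col_submat_def p_t_mat_def young_to_increasing_def)
  then have "det (col_submat (p_t_mat n N) (young_to_increasing n lam)) =
      det (mat n n (\<lambda>(i, j). ?f (n - 1 - i) (n - 1 - j)))"
    by (simp only:) (rule det_transpose[of _ n], simp)
  also have "\<dots> = det (mat n n (\<lambda>(i, j). ?f i j))"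
    by (rule det_reverse_rows_cols)
  finally show ?thesis by (simp add: schur_t_def len)
qed

lemma det_row_submat_p_neg_s_mat:
  assumes "nu \<in> young_bounded n N" "n > 0"
  shows "det (row_submat (p_neg_s_mat N n) (young_to_increasing n nu)) = schur_neg_s nu"
proof -
  let ?g = "\<lambda>i j. p_neg_s (int (nu ! i) - int i + int j)"
  have len: "length nu = n" using assms by (simp add: young_bounded_def young_def)
  have ks: "young_to_increasing n nu \<in> increasing_lists n N"
    by (rule young_to_increasing_in[OF assms(2,1)])
  have "row_submat (p_neg_s_mat N n) (young_to_increasing n nu) = mat n n (\<lambda>(i, j). ?g (n - 1 - i) (n - 1 - j))"
  proof (rule eq_matI)
    fix i j assume "i < dim_row (mat n n (\<lambda>(i, j). ?g (n - 1 - i) (n - 1 - j)))"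
      "j < dim_col (mat n n (\<lambda>(i, j). ?g (n - 1 - i) (n - 1 - j)))"
    then have ij: "i < n" "j < n" by auto
    then have "int (nu ! (n - 1 - i) + i) - int j = int (nu ! (n - 1 - i)) - int (n - 1 - i) + int (n - 1 - j)"
      by linarith
    then show "row_submat (p_neg_s_mat N n) (young_to_increasing n nu) $$ (i, j) =
        mat n n (\<lambda>(i, j). ?g (n - 1 - i) (n - 1 - j)) $$ (i, j)"
      using ij increasing_lists_nth[OF ks, of i]
      by (simp add: row_submat_def p_neg_s_mat_def young_to_increasing_def add_diff_eq)
  qed (simp_all add: row_submat_def p_neg_s_mat_def young_to_increasing_def)
  also have "det \<dots> = det (mat n n (\<lambda>(i, j). ?g i j))"
    by (rule det_reverse_rows_cols)
  finally show ?thesis by (simp add: schur_neg_s_def len)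
qed

lemma det_submat_mu_mat:
  assumes "lam \<in> young_bounded n N" "nu \<in> young_bounded n N" "n > 0"
  shows "det (row_submat (col_submat (mu_mat \<mu> N) (young_to_increasing n nu)) (young_to_increasing n lam)) =
    mfps_const (mu_minor \<mu> n lam nu)"
proof -
  let ?h = "\<lambda>i j. \<mu> (young_to_increasing n lam ! i) (young_to_increasing n nu ! j)"
  have ks: "young_to_increasing n lam \<in> increasing_lists n N" "young_to_increasing n nu \<in> increasing_lists n N"
    using young_to_increasing_in assms by blast+
  have "row_submat (col_submat (mu_mat \<mu> N) (young_to_increasing n nu)) (young_to_increasing n lam) =
      map_mat mfps_const (mat n n (\<lambda>(i, j). ?h i j))"
    using increasing_lists_nth[OF ks(1)] increasing_lists_nth[OF ks(2)]
    by (intro eq_matI) (auto simp: row_submat_def col_submat_def mu_mat_def young_to_increasing_def)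
  then have "det (row_submat (col_submat (mu_mat \<mu> N) (young_to_increasing n nu)) (young_to_increasing n lam)) =
      mfps_const (det (mat n n (\<lambda>(i, j). ?h i j)))"
    by (simp add: mfps_const.hom_det)
  also have "det (mat n n (\<lambda>(i, j). ?h i j)) = det (mat n n (\<lambda>(i, j). ?h (n - 1 - i) (n - 1 - j)))"
    by (rule det_reverse_rows_cols[symmetric])
  also have "\<dots> = mu_minor \<mu> n lam nu"
    unfolding mu_minor_def by (intro arg_cong[where f = det] eq_matI) (auto simp: young_to_increasing_def)
  finally show ?thesis .
qed

lemma det_truncated_eq_sum_schur:
  assumes "n > 0"
  shows "det (p_t_mat n N * mu_mat \<mu> N * p_neg_s_mat N n) =
    (\<Sum>lam\<in>young_bounded n N. \<Sum>nu\<in>young_bounded n N.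
       mfps_const (mu_minor \<mu> n lam nu) * (schur_t lam * schur_neg_s nu))"
proof -
  let ?k = "young_to_increasing n"
  let ?H = "\<lambda>ks rs. det (col_submat (p_t_mat n N) ks) * det (row_submat (col_submat (mu_mat \<mu> N) rs) ks) *
      det (row_submat (p_neg_s_mat N n) rs)"
  have bij: "bij_betw ?k (young_bounded n N) (increasing_lists n N)"
    by (rule bij_betw_young_to_increasing[OF assms])
  have "det (p_t_mat n N * mu_mat \<mu> N * p_neg_s_mat N n) =
      (\<Sum>ks\<in>increasing_lists n N. \<Sum>rs\<in>increasing_lists n N. ?H ks rs)"
    by (rule cauchy_binet_triple) (simp_all add: p_t_mat_def mu_mat_def p_neg_s_mat_def)
  also have "\<dots> = (\<Sum>lam\<in>young_bounded n N. \<Sum>nu\<in>young_bounded n N. ?H (?k lam) (?k nu))"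
    by (simp add: sum.reindex_bij_betw[OF bij, symmetric])
  also have "\<dots> = (\<Sum>lam\<in>young_bounded n N. \<Sum>nu\<in>young_bounded n N.
      mfps_const (mu_minor \<mu> n lam nu) * (schur_t lam * schur_neg_s nu))"
    by (intro sum.cong refl) (simp add: det_col_submat_p_t_mat det_row_submat_p_neg_s_mat
        det_submat_mu_mat assms ac_simps)
  finally show ?thesis .
qed

lemma schur_expansion_coeff_eq_truncated:
  assumes "n > 0" "n + mon_weight ts_index m < N"
  shows "ser_sum (\<lambda>(lam, nu). ser_scale (mu_minor \<mu> n lam nu)
        (ser_mult (ser_subst t_vars (schur lam)) (ser_subst neg_s_vars (schur nu)))) (young n \<times> young n) m =
    coeffs (\<Sum>lam\<in>young_bounded n N. \<Sum>nu\<in>young_bounded n N.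
       mfps_const (mu_minor \<mu> n lam nu) * (schur_t lam * schur_neg_s nu)) m"
proof -
  let ?c = "\<lambda>(lam, nu). coeffs (mfps_const (mu_minor \<mu> n lam nu) * (schur_t lam * schur_neg_s nu)) m"
  have summand: "ser_scale (mu_minor \<mu> n lam nu) (ser_mult (ser_subst t_vars (schur lam)) (ser_subst neg_s_vars (schur nu))) =
      coeffs (mfps_const (mu_minor \<mu> n lam nu) * (schur_t lam * schur_neg_s nu))" for lam nu
    by (simp add: ser_scale_eq coeffs_times schur_t_eq_subst[symmetric] schur_neg_s_eq_subst[symmetric] mfps_inverse)
  have "ser_sum (\<lambda>(lam, nu). ser_scale (mu_minor \<mu> n lam nu)
        (ser_mult (ser_subst t_vars (schur lam)) (ser_subst neg_s_vars (schur nu)))) (young n \<times> young n) m =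
      (\<Sum>\<^sub>\<infinity>x\<in>young n \<times> young n. ?c x)"
    by (simp add: ser_sum_def summand case_prod_beta)
  also have "\<dots> = (\<Sum>x\<in>(young n \<times> young n) \<inter> (young_bounded n N \<times> young_bounded n N). ?c x)"
  proof (rule infsum_eq_sum_support)
    show "finite (young_bounded n N \<times> young_bounded n N)"
      using finite_young_bounded[OF assms(1)] by simp
  next
    fix x assume x: "x \<in> young n \<times> young n" "x \<notin> young_bounded n N \<times> young_bounded n N"
    then obtain lam nu where lam_nu: "x = (lam, nu)" "lam \<in> young n" "nu \<in> young n" by auto
    then have ne: "lam \<noteq> []" "nu \<noteq> []" using assms(1) by (auto simp: young_def)
    have "mon_weight ts_index m < lam ! 0 \<or> mon_weight ts_index m < nu ! 0"
      using x lam_nu assms(2) by (auto simp: young_bounded_def)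
    then have "agree_upto ts_index (mon_weight ts_index m) (schur_t lam * schur_neg_s nu) 0"
      using agree_upto_mult[OF agree_upto_schur_t[OF ne(1)] agree_upto_refl]
        agree_upto_mult[OF agree_upto_refl agree_upto_schur_neg_s[OF ne(2)]] by fastforce
    then show "?c x = 0"
      using agree_upto_coeffs[OF _ order_refl] lam_nu by fastforce
  qed
  also have "(young n \<times> young n) \<inter> (young_bounded n N \<times> young_bounded n N) = young_bounded n N \<times> young_bounded n N"
    by (auto simp: young_bounded_def)
  also have "(\<Sum>x\<in>young_bounded n N \<times> young_bounded n N. ?c x) =
      coeffs (\<Sum>lam\<in>young_bounded n N. \<Sum>nu\<in>young_bounded n N.
       mfps_const (mu_minor \<mu> n lam nu) * (schur_t lam * schur_neg_s nu)) m"
    by (simp add: sum.cartesian_product case_prod_beta)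
  finally show ?thesis .
qed

theorem mainTheorem11:
  fixes \<mu> :: "nat \<Rightarrow> nat \<Rightarrow> complex" and n :: nat
  assumes "n > 0"
  shows "tau \<mu> n =
    ser_sum (\<lambda>(lam, nu).
        ser_scale (det (mat n n (\<lambda>(i, j). \<mu> (lam ! i + n - Suc i) (nu ! j + n - Suc j))))
          (ser_mult (ser_subst t_vars (schur lam)) (ser_subst neg_s_vars (schur nu))))
      (young n \<times> young n)"
proof -
  have expansion: "tau \<mu> n m = ser_sum (\<lambda>(lam, nu). ser_scale (mu_minor \<mu> n lam nu)
      (ser_mult (ser_subst t_vars (schur lam)) (ser_subst neg_s_vars (schur nu)))) (young n \<times> young n) m"
    for m
  proof -
    define N where "N = n + mon_weight ts_index m + 1"
    then have N: "n + mon_weight ts_index m < N" by simp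
    have "tau \<mu> n m = coeffs (det (p_t_mat n N * mu_mat \<mu> N * p_neg_s_mat N n)) m"
      by (rule tau_coeff_eq_truncated[OF N])
    also have "\<dots> = coeffs (\<Sum>lam\<in>young_bounded n N. \<Sum>nu\<in>young_bounded n N.
        mfps_const (mu_minor \<mu> n lam nu) * (schur_t lam * schur_neg_s nu)) m"
      by (simp only: det_truncated_eq_sum_schur[OF assms])
    also have "\<dots> = ser_sum (\<lambda>(lam, nu). ser_scale (mu_minor \<mu> n lam nu)
        (ser_mult (ser_subst t_vars (schur lam)) (ser_subst neg_s_vars (schur nu)))) (young n \<times> young n) m"
      by (rule schur_expansion_coeff_eq_truncated[OF assms N, symmetric])
    finally show ?thesis .
  qed
  show ?thesis
    by (rule ext, rule expansion[unfolded mu_minor_def])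
qed

end
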